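(* Let $M_1$ and $M_2$ be homogeneous monoids. Then the free product $M_1*M_2$ is FCRS if and only if both $M_1$ and $M_2$ are FCRS.
   Context: A monoid is homogeneous if it admits a finite presentation $\langle A\mid\mathcal{R}\rangle$ with $|u|=|v|$ for all $(u,v)\in\mathcal{R}$. A monoid is FCRS if it admits a presentation by a finite complete (noetherian and confluent) string rewriting system over some finite generating set. *)

theory Defs
  imports "HOL-Algebra.Group"
begin

definition rstep :: "'a set \<Rightarrow> ('a list \<times> 'a list) set \<Rightarrow> ('a list \<times> 'a list) set" where
  "rstep A R = {(x @ l @ y, x @ r @ y) | x l r y.
      (l, r) \<in> R \<and> x \<in> lists A \<and> y \<in> lists A \<and> l \<in> lists A \<and> r \<in> lists A}"

definition thue_cong :: "'a set \<Rightarrow> ('a list \<times> 'a list) set \<Rightarrow> ('a list \<times> 'a list) set" where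
  "thue_cong A R = Id_on (lists A) \<union> (rstep A R \<union> (rstep A R)\<inverse>)\<^sup>+"

definition pres_monoid :: "'a set \<Rightarrow> ('a list \<times> 'a list) set \<Rightarrow> ('a list set) monoid" where
  "pres_monoid A R = \<lparr> carrier = lists A // thue_cong A R,
      mult = (\<lambda>X Y. \<Union>x\<in>X. \<Union>y\<in>Y. thue_cong A R `` {x @ y}),
      one = thue_cong A R `` {[]} \<rparr>"

definition noetherian :: "'a set \<Rightarrow> ('a list \<times> 'a list) set \<Rightarrow> bool" where
  "noetherian A R \<longleftrightarrow> wf ((rstep A R)\<inverse>)"

definition confluent :: "'a set \<Rightarrow> ('a list \<times> 'a list) set \<Rightarrow> bool" where
  "confluent A R \<longleftrightarrow> (\<forall>w u v. (w, u) \<in> (rstep A R)\<^sup>* \<and> (w, v) \<in> (rstep A R)\<^sup>* \<longrightarrow>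
      (\<exists>z. (u, z) \<in> (rstep A R)\<^sup>* \<and> (v, z) \<in> (rstep A R)\<^sup>*))"

definition complete_rs :: "'a set \<Rightarrow> ('a list \<times> 'a list) set \<Rightarrow> bool" where
  "complete_rs A R \<longleftrightarrow> noetherian A R \<and> confluent A R"

text \<open>Finite alphabets are taken, without loss of generality, to be finite sets of naturals.\<close>
definition homogeneous_monoid :: "('m, 'e) monoid_scheme \<Rightarrow> bool" where
  "homogeneous_monoid M \<longleftrightarrow> (\<exists>(A :: nat set) R. finite A \<and> finite R \<and>
      R \<subseteq> lists A \<times> lists A \<and> (\<forall>(u, v) \<in> R. length u = length v) \<and>
      M \<cong> pres_monoid A R)"

definition FCRS :: "('m, 'e) monoid_scheme \<Rightarrow> bool" where
  "FCRS M \<longleftrightarrow> (\<exists>(A :: nat set) R. finite A \<and> finite R \<and>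
      R \<subseteq> lists A \<times> lists A \<and> complete_rs A R \<and> M \<cong> pres_monoid A R)"

text \<open>Free product M1 * M2, via its standard presentation: generators are the elements of
  M1 and M2 (disjointly), relations are the multiplication tables and the identities.\<close>
definition free_product :: "('a, 'e1) monoid_scheme \<Rightarrow> ('b, 'e2) monoid_scheme
    \<Rightarrow> (('a + 'b) list set) monoid" where
  "free_product M1 M2 = pres_monoid (Inl ` carrier M1 \<union> Inr ` carrier M2)
     ({([Inl x, Inl y], [Inl (x \<otimes>\<^bsub>M1\<^esub> y)]) | x y. x \<in> carrier M1 \<and> y \<in> carrier M1}
      \<union> {([Inl \<one>\<^bsub>M1\<^esub>], [])}
      \<union> {([Inr x, Inr y], [Inr (x \<otimes>\<^bsub>M2\<^esub> y)]) | x y. x \<in> carrier M2 \<and> y \<in> carrier M2}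
      \<union> {([Inr \<one>\<^bsub>M2\<^esub>], [])})"

end

theory Submission
  imports Defs
begin

text \<open>
  If \<open>M2\<close> is homogeneous, the lengths of its words give every element of \<open>M1 * M2\<close> an
  \<open>M2\<close>-degree, and the elements of degree \<open>0\<close> are exactly the copy of \<open>M1\<close>. Rewriting
  with a finite complete system for \<open>M1 * M2\<close> preserves degrees, so its rules over the
  generators of degree \<open>0\<close> form a finite complete system for \<open>M1\<close>; as the free product is
  commutative up to isomorphism, the same holds for \<open>M2\<close>. Conversely, the disjoint union of
  finite complete systems for \<open>M1\<close> and \<open>M2\<close> presents \<open>M1 * M2\<close> and is again complete: it
  terminates lexicographically on the two projections, and overlapping redexes lie in a
  single factor, where they are joinable, so Newman's lemma applies.
\<close>

lemma rstep_lists: "(u, v) \<in> rstep A R \<Longrightarrow> u \<in> lists A \<and> v \<in> lists A"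
  unfolding rstep_def by auto

lemma rstepI:
  "\<lbrakk>(l, r) \<in> R; x \<in> lists A; y \<in> lists A; l \<in> lists A; r \<in> lists A\<rbrakk>
   \<Longrightarrow> (x @ l @ y, x @ r @ y) \<in> rstep A R"
  unfolding rstep_def by blast

lemma rstepE:
  assumes "(u, v) \<in> rstep A R"
  obtains x l r y where "u = x @ l @ y" "v = x @ r @ y" "(l, r) \<in> R"
    "x \<in> lists A" "y \<in> lists A" "l \<in> lists A" "r \<in> lists A"
  using assms unfolding rstep_def by blast

lemma rstep_rule: "\<lbrakk>(l, r) \<in> R; l \<in> lists A; r \<in> lists A\<rbrakk> \<Longrightarrow> (l, r) \<in> rstep A R"
  using rstepI[of l r R "[]" A "[]"] by simp

lemma rstep_context:
  assumes "(u, v) \<in> rstep A R" "p \<in> lists A" "q \<in> lists A"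
  shows "(p @ u @ q, p @ v @ q) \<in> rstep A R"
proof -
  obtain x l r y where "u = x @ l @ y" "v = x @ r @ y" "(l, r) \<in> R"
    "x \<in> lists A" "y \<in> lists A" "l \<in> lists A" "r \<in> lists A"
    using assms(1) by (rule rstepE)
  with assms(2,3) show ?thesis
    using rstepI[of l r R "p @ x" A "y @ q"] by simp
qed

lemma rtrancl_rstep_lists: "\<lbrakk>(u, v) \<in> (rstep A R)\<^sup>*; u \<in> lists A\<rbrakk> \<Longrightarrow> v \<in> lists A"
  by (induction rule: rtrancl_induct) (auto dest: rstep_lists)

lemma rtrancl_rstep_context:
  assumes "(u, v) \<in> (rstep A R)\<^sup>*" "p \<in> lists A" "q \<in> lists A"
  shows "(p @ u @ q, p @ v @ q) \<in> (rstep A R)\<^sup>*"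
  using assms(1)
proof (induction rule: rtrancl_induct)
  case (step v w)
  from step.IH rstep_context[OF step(2) assms(2,3)] show ?case
    by (rule rtrancl_into_rtrancl)
qed simp

lemma rtrancl_rstep_append_left:
  "\<lbrakk>(u, v) \<in> (rstep A R)\<^sup>*; p \<in> lists A\<rbrakk> \<Longrightarrow> (p @ u, p @ v) \<in> (rstep A R)\<^sup>*"
  using rtrancl_rstep_context[of u v A R p "[]"] by simp

lemma rtrancl_rstep_append_right:
  "\<lbrakk>(u, v) \<in> (rstep A R)\<^sup>*; q \<in> lists A\<rbrakk> \<Longrightarrow> (u @ q, v @ q) \<in> (rstep A R)\<^sup>*"
  using rtrancl_rstep_context[of u v A R "[]" q] by simp

lemma rstep_mono: "\<lbrakk>A' \<subseteq> A; R' \<subseteq> R\<rbrakk> \<Longrightarrow> rstep A' R' \<subseteq> rstep A R"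
  unfolding rstep_def using lists_mono by blast

lemma map_in_lists: "\<lbrakk>g ` A \<subseteq> A'; w \<in> lists A\<rbrakk> \<Longrightarrow> map g w \<in> lists A'"
  by (induction w) auto

lemma rstep_map:
  assumes "g ` A \<subseteq> A'" "\<And>l r. (l, r) \<in> R \<Longrightarrow> (map g l, map g r) \<in> R'"
    and "(u, v) \<in> rstep A R"
  shows "(map g u, map g v) \<in> rstep A' R'"
proof -
  obtain x l r y where "u = x @ l @ y" "v = x @ r @ y" "(l, r) \<in> R"
    "x \<in> lists A" "y \<in> lists A" "l \<in> lists A" "r \<in> lists A"
    using assms(3) by (rule rstepE)
  with assms(1,2) show ?thesis
    using rstepI[of "map g l" "map g r" R' "map g x" A' "map g y"] by (simp add: map_in_lists)
qed

lemma rtrancl_rstep_map: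
  assumes "g ` A \<subseteq> A'" "\<And>l r. (l, r) \<in> R \<Longrightarrow> (map g l, map g r) \<in> R'"
    and "(u, v) \<in> (rstep A R)\<^sup>*"
  shows "(map g u, map g v) \<in> (rstep A' R')\<^sup>*"
  using assms(3)
proof (induction rule: rtrancl_induct)
  case (step v w)
  have "(map g v, map g w) \<in> rstep A' R'"
    using assms(1,2) step(2) by (rule rstep_map)
  with step.IH show ?case
    by (rule rtrancl_into_rtrancl)
qed simp

lemma thue_cong_iff:
  "(u, v) \<in> thue_cong A R \<longleftrightarrow> u \<in> lists A \<and> (u, v) \<in> (rstep A R \<union> (rstep A R)\<inverse>)\<^sup>*"
proof -
  have "u \<in> lists A" if "(u, v) \<in> (rstep A R \<union> (rstep A R)\<inverse>)\<^sup>+"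
    using that by (induction rule: trancl_induct) (auto dest: rstep_lists)
  then show ?thesis
    unfolding thue_cong_def by (auto simp: Id_on_def rtrancl_eq_or_trancl)
qed

lemma thue_cong_lists: "(u, v) \<in> thue_cong A R \<Longrightarrow> u \<in> lists A \<and> v \<in> lists A"
proof -
  have "v \<in> lists A" if "(u, v) \<in> (rstep A R \<union> (rstep A R)\<inverse>)\<^sup>*" "u \<in> lists A"
    using that by (induction rule: rtrancl_induct) (auto dest: rstep_lists)
  then show "(u, v) \<in> thue_cong A R \<Longrightarrow> u \<in> lists A \<and> v \<in> lists A"
    by (auto simp: thue_cong_iff)
qed

lemma thue_cong_refl: "u \<in> lists A \<Longrightarrow> (u, u) \<in> thue_cong A R"
  by (simp add: thue_cong_iff)

lemma thue_cong_sym: "(u, v) \<in> thue_cong A R \<Longrightarrow> (v, u) \<in> thue_cong A R"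
proof -
  have "sym ((rstep A R \<union> (rstep A R)\<inverse>)\<^sup>*)"
    by (intro sym_rtrancl) (auto simp: sym_def)
  then show "(u, v) \<in> thue_cong A R \<Longrightarrow> (v, u) \<in> thue_cong A R"
    using thue_cong_lists[of u v A R] by (auto simp: thue_cong_iff dest: symD)
qed

lemma thue_cong_trans:
  "\<lbrakk>(u, v) \<in> thue_cong A R; (v, w) \<in> thue_cong A R\<rbrakk> \<Longrightarrow> (u, w) \<in> thue_cong A R"
  by (auto simp: thue_cong_iff)

lemma rstep_imp_thue_cong: "(u, v) \<in> rstep A R \<Longrightarrow> (u, v) \<in> thue_cong A R"
  by (auto simp: thue_cong_iff dest: rstep_lists)

lemma rtrancl_rstep_imp_thue_cong:
  "\<lbrakk>(u, v) \<in> (rstep A R)\<^sup>*; u \<in> lists A\<rbrakk> \<Longrightarrow> (u, v) \<in> thue_cong A R"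
  by (auto simp: thue_cong_iff intro: rtrancl_mono[THEN subsetD])

lemma rule_imp_thue_cong:
  "\<lbrakk>(l, r) \<in> R; l \<in> lists A; r \<in> lists A\<rbrakk> \<Longrightarrow> (l, r) \<in> thue_cong A R"
  by (intro rstep_imp_thue_cong rstep_rule)

lemma equiv_thue_cong: "equiv (lists A) (thue_cong A R)"
  by (rule equivI) (auto simp: refl_on_def sym_def trans_def dest: thue_cong_lists
      intro: thue_cong_refl thue_cong_sym thue_cong_trans)

lemma thue_cong_invariant:
  assumes "(u, v) \<in> thue_cong A R" "\<And>u v. (u, v) \<in> rstep A R \<Longrightarrow> F u = F v"
  shows "F u = F v"
proof -
  have "(u, v) \<in> (rstep A R \<union> (rstep A R)\<inverse>)\<^sup>*"
    using assms(1) by (simp add: thue_cong_iff)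
  then show ?thesis
    by (induction rule: rtrancl_induct) (auto dest: assms(2))
qed

lemma thue_cong_context:
  assumes "(u, v) \<in> thue_cong A R" "p \<in> lists A" "q \<in> lists A"
  shows "(p @ u @ q, p @ v @ q) \<in> thue_cong A R"
proof -
  let ?S = "rstep A R \<union> (rstep A R)\<inverse>"
  have "(p @ u @ q, p @ v @ q) \<in> ?S\<^sup>*" if "(u, v) \<in> ?S\<^sup>*"
    using that
  proof (induction rule: rtrancl_induct)
    case (step y z)
    then have "(p @ y @ q, p @ z @ q) \<in> rstep A R \<union> (rstep A R)\<inverse>"
      using rstep_context assms(2,3) by blast
    with step.IH show ?case
      by (rule rtrancl_into_rtrancl)
  qed simp
  with assms show ?thesis
    by (auto simp: thue_cong_iff)
qed

lemma thue_cong_append: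
  assumes "(u, u') \<in> thue_cong A R" "(v, v') \<in> thue_cong A R"
  shows "(u @ v, u' @ v') \<in> thue_cong A R"
proof -
  have "(u @ v, u' @ v) \<in> thue_cong A R"
    using thue_cong_context[OF assms(1), of "[]" v] thue_cong_lists[OF assms(2)] by simp
  moreover have "(u' @ v, u' @ v') \<in> thue_cong A R"
    using thue_cong_context[OF assms(2), of u' "[]"] thue_cong_lists[OF assms(1)] by simp
  ultimately show ?thesis
    by (rule thue_cong_trans)
qed

lemma thue_cong_map:
  assumes "g ` A \<subseteq> A'"
    and "\<And>l r. \<lbrakk>(l, r) \<in> R; l \<in> lists A; r \<in> lists A\<rbrakk> \<Longrightarrow> (map g l, map g r) \<in> thue_cong A' R'"
    and "(u, v) \<in> thue_cong A R"
  shows "(map g u, map g v) \<in> thue_cong A' R'"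
proof -
  have one_step: "(map g x, map g y) \<in> thue_cong A' R'" if xy: "(x, y) \<in> rstep A R" for x y
  proof -
    obtain p l r q where "x = p @ l @ q" "y = p @ r @ q" "(l, r) \<in> R"
      "p \<in> lists A" "q \<in> lists A" "l \<in> lists A" "r \<in> lists A"
      using xy by (rule rstepE)
    moreover have "map g p \<in> lists A'" "map g q \<in> lists A'"
      using \<open>p \<in> lists A\<close> \<open>q \<in> lists A\<close> assms(1) by (simp_all add: map_in_lists)
    ultimately show ?thesis
      using thue_cong_context[OF assms(2), of l r "map g p" "map g q"] by simp
  qed
  have u: "u \<in> lists A" and uv: "(u, v) \<in> (rstep A R \<union> (rstep A R)\<inverse>)\<^sup>*"
    using assms(3) by (simp_all add: thue_cong_iff)
  from uv show ?thesis
  proof (induction rule: rtrancl_induct)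
    case base
    show ?case
      using assms(1) u by (simp add: map_in_lists thue_cong_refl)
  next
    case (step y z)
    then have "(map g y, map g z) \<in> thue_cong A' R'"
      by (auto intro: one_step thue_cong_sym)
    with step.IH show ?case
      by (rule thue_cong_trans)
  qed
qed

lemma thue_cong_mono:
  assumes "A' \<subseteq> A" "R' \<subseteq> R"
  shows "thue_cong A' R' \<subseteq> thue_cong A R"
proof -
  have sub: "(rstep A' R' \<union> (rstep A' R')\<inverse>)\<^sup>* \<subseteq> (rstep A R \<union> (rstep A R)\<inverse>)\<^sup>*"
    using rstep_mono[OF assms] by (intro rtrancl_mono) blast
  show ?thesis
  proof (rule subrelI)
    fix u v assume "(u, v) \<in> thue_cong A' R'"
    then have u: "u \<in> lists A'" and uv: "(u, v) \<in> (rstep A' R' \<union> (rstep A' R')\<inverse>)\<^sup>*"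
      by (simp_all add: thue_cong_iff)
    have "u \<in> lists A"
      using lists_mono[OF assms(1)] u ..
    moreover have "(u, v) \<in> (rstep A R \<union> (rstep A R)\<inverse>)\<^sup>*"
      using sub uv ..
    ultimately show "(u, v) \<in> thue_cong A R"
      by (simp add: thue_cong_iff)
  qed
qed

abbreviation pres_class :: "'a set \<Rightarrow> ('a list \<times> 'a list) set \<Rightarrow> 'a list \<Rightarrow> 'a list set" where
  "pres_class A R w \<equiv> thue_cong A R `` {w}"

lemma pres_class_eq_iff:
  "\<lbrakk>u \<in> lists A; v \<in> lists A\<rbrakk> \<Longrightarrow> pres_class A R u = pres_class A R v \<longleftrightarrow> (u, v) \<in> thue_cong A R"
  by (rule eq_equiv_class_iff[OF equiv_thue_cong])

lemma pres_class_self: "u \<in> lists A \<Longrightarrow> u \<in> pres_class A R u"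
  by (simp add: thue_cong_refl)

lemma carrier_pres_monoid: "carrier (pres_monoid A R) = lists A // thue_cong A R"
  by (simp add: pres_monoid_def)

lemma one_pres_monoid: "\<one>\<^bsub>pres_monoid A R\<^esub> = pres_class A R []"
  by (simp add: pres_monoid_def)

lemma pres_class_in_carrier: "u \<in> lists A \<Longrightarrow> pres_class A R u \<in> carrier (pres_monoid A R)"
  by (simp add: carrier_pres_monoid quotientI)

lemma carrier_pres_monoidE:
  assumes "X \<in> carrier (pres_monoid A R)"
  obtains w where "w \<in> lists A" "X = pres_class A R w"
  using assms by (auto simp: carrier_pres_monoid elim!: quotientE)

lemma mult_pres_class:
  assumes "u \<in> lists A" "v \<in> lists A"
  shows "pres_class A R u \<otimes>\<^bsub>pres_monoid A R\<^esub> pres_class A R v = pres_class A R (u @ v)"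
proof -
  have "pres_class A R (x @ y) = pres_class A R (u @ v)"
    if "x \<in> pres_class A R u" "y \<in> pres_class A R v" for x y
  proof -
    have "(u @ v, x @ y) \<in> thue_cong A R"
      using that by (simp add: thue_cong_append)
    then show ?thesis
      using pres_class_eq_iff thue_cong_lists thue_cong_sym by metis
  qed
  then have "(\<Union>x\<in>pres_class A R u. \<Union>y\<in>pres_class A R v. pres_class A R (x @ y))
      = (\<Union>x\<in>pres_class A R u. \<Union>y\<in>pres_class A R v. pres_class A R (u @ v))"
    by (intro SUP_cong refl)
  also have "\<dots> = pres_class A R (u @ v)"
    using pres_class_self[OF assms(1)] pres_class_self[OF assms(2)] by blast
  finally show ?thesis
    unfolding pres_monoid_def by (simp only: monoid.select_convs)
qed

lemma monoid_pres_monoid: "monoid (pres_monoid A R)"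
proof (rule monoidI)
  fix x y z
  assume "x \<in> carrier (pres_monoid A R)" "y \<in> carrier (pres_monoid A R)"
    "z \<in> carrier (pres_monoid A R)"
  then obtain u v w where "u \<in> lists A" "v \<in> lists A" "w \<in> lists A"
    "x = pres_class A R u" "y = pres_class A R v" "z = pres_class A R w"
    by (metis carrier_pres_monoidE)
  then show "x \<otimes>\<^bsub>pres_monoid A R\<^esub> y \<in> carrier (pres_monoid A R)"
    and "x \<otimes>\<^bsub>pres_monoid A R\<^esub> y \<otimes>\<^bsub>pres_monoid A R\<^esub> z =
      x \<otimes>\<^bsub>pres_monoid A R\<^esub> (y \<otimes>\<^bsub>pres_monoid A R\<^esub> z)"
    and "\<one>\<^bsub>pres_monoid A R\<^esub> \<otimes>\<^bsub>pres_monoid A R\<^esub> x = x"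
    and "x \<otimes>\<^bsub>pres_monoid A R\<^esub> \<one>\<^bsub>pres_monoid A R\<^esub> = x"
    by (simp_all add: mult_pres_class one_pres_monoid pres_class_in_carrier)
qed (simp add: one_pres_monoid pres_class_in_carrier)

lemma pres_class_Cons:
  "\<lbrakk>a \<in> A; w \<in> lists A\<rbrakk>
   \<Longrightarrow> pres_class A R (a # w) = pres_class A R [a] \<otimes>\<^bsub>pres_monoid A R\<^esub> pres_class A R w"
  by (simp add: mult_pres_class)

primrec eval_word :: "('b, 'c) monoid_scheme \<Rightarrow> ('a \<Rightarrow> 'b) \<Rightarrow> 'a list \<Rightarrow> 'b" where
  "eval_word N \<phi> [] = \<one>\<^bsub>N\<^esub>"
| "eval_word N \<phi> (a # w) = \<phi> a \<otimes>\<^bsub>N\<^esub> eval_word N \<phi> w"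

lemma eval_word_closed:
  "\<lbrakk>monoid N; \<phi> \<in> A \<rightarrow> carrier N; w \<in> lists A\<rbrakk> \<Longrightarrow> eval_word N \<phi> w \<in> carrier N"
  by (induction w) (auto intro: monoid.m_closed monoid.one_closed)

lemma eval_word_append:
  assumes "monoid N" "\<phi> \<in> A \<rightarrow> carrier N" "u \<in> lists A" "v \<in> lists A"
  shows "eval_word N \<phi> (u @ v) = eval_word N \<phi> u \<otimes>\<^bsub>N\<^esub> eval_word N \<phi> v"
  using assms(3)
proof (induction u)
  case Nil
  show ?case
    using eval_word_closed[OF assms(1,2,4)] by (simp add: monoid.l_one[OF assms(1)])
next
  case (Cons a u)
  then have "\<phi> a \<in> carrier N" "eval_word N \<phi> u \<in> carrier N" "eval_word N \<phi> v \<in> carrier N"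
    using assms eval_word_closed[OF assms(1,2)] by auto
  with Cons show ?case
    by (simp add: monoid.m_assoc[OF assms(1)])
qed

lemma eval_word_map: "eval_word N \<phi> (map g w) = eval_word N (\<phi> \<circ> g) w"
  by (induction w) simp_all

lemma eval_word_cong:
  "\<lbrakk>\<And>a. a \<in> A \<Longrightarrow> \<phi> a = \<psi> a; w \<in> lists A\<rbrakk> \<Longrightarrow> eval_word N \<phi> w = eval_word N \<psi> w"
  by (induction w) simp_all

lemma hom_eval_word:
  assumes "h \<in> hom M N" "h \<one>\<^bsub>M\<^esub> = \<one>\<^bsub>N\<^esub>" "monoid M" "\<phi> \<in> A \<rightarrow> carrier M" "w \<in> lists A"
  shows "h (eval_word M \<phi> w) = eval_word N (h \<circ> \<phi>) w"
  using assms(5)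
proof (induction w)
  case (Cons a w)
  then have "\<phi> a \<in> carrier M" "eval_word M \<phi> w \<in> carrier M"
    using assms(4) eval_word_closed[OF assms(3,4)] by auto
  with Cons show ?case
    by (simp add: hom_mult[OF assms(1)])
qed (simp add: assms(2))

lemma eval_word_pres_class:
  "map g w \<in> lists A \<Longrightarrow> eval_word (pres_monoid A R) (\<lambda>a. pres_class A R [g a]) w = pres_class A R (map g w)"
  by (induction w) (simp_all add: one_pres_monoid mult_pres_class)

definition respects_rules :: "('b, 'c) monoid_scheme \<Rightarrow> ('a \<Rightarrow> 'b) \<Rightarrow> 'a set \<Rightarrow> ('a list \<times> 'a list) set \<Rightarrow> bool" where
  "respects_rules N \<phi> A R \<longleftrightarrow>
     (\<forall>l r. (l, r) \<in> R \<longrightarrow> l \<in> lists A \<longrightarrow> r \<in> lists A \<longrightarrow> eval_word N \<phi> l = eval_word N \<phi> r)"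

lemma eval_word_thue_cong:
  assumes "monoid N" "\<phi> \<in> A \<rightarrow> carrier N" "respects_rules N \<phi> A R" "(u, v) \<in> thue_cong A R"
  shows "eval_word N \<phi> u = eval_word N \<phi> v"
  using assms(4)
proof (rule thue_cong_invariant[where F = "eval_word N \<phi>"])
  fix u v assume "(u, v) \<in> rstep A R"
  then obtain x l r y where uv: "u = x @ l @ y" "v = x @ r @ y" "(l, r) \<in> R"
    and lists: "x \<in> lists A" "y \<in> lists A" "l \<in> lists A" "r \<in> lists A"
    by (rule rstepE)
  have "eval_word N \<phi> l = eval_word N \<phi> r"
    using assms(3) uv(3) lists(3,4) unfolding respects_rules_def by blast
  then show "eval_word N \<phi> u = eval_word N \<phi> v"
    using lists by (simp add: uv eval_word_append[OF assms(1,2)])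
qed

definition induced_hom :: "('b, 'c) monoid_scheme \<Rightarrow> ('a \<Rightarrow> 'b) \<Rightarrow> 'a list set \<Rightarrow> 'b" where
  "induced_hom N \<phi> X = eval_word N \<phi> (SOME w. w \<in> X)"

context
  fixes N :: "('b, 'c) monoid_scheme" and \<phi> :: "'a \<Rightarrow> 'b" and A R
  assumes N: "monoid N" and \<phi>: "\<phi> \<in> A \<rightarrow> carrier N" and resp: "respects_rules N \<phi> A R"
begin

lemma induced_hom_class: "w \<in> lists A \<Longrightarrow> induced_hom N \<phi> (pres_class A R w) = eval_word N \<phi> w"
  unfolding induced_hom_def
  by (rule eval_word_thue_cong[OF N \<phi> resp, symmetric])
    (metis Image_singleton_iff pres_class_self someI)

lemma induced_hom_hom: "induced_hom N \<phi> \<in> hom (pres_monoid A R) N"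
proof (rule homI)
  fix X Y
  assume "X \<in> carrier (pres_monoid A R)" "Y \<in> carrier (pres_monoid A R)"
  then obtain u v where "u \<in> lists A" "v \<in> lists A" "X = pres_class A R u" "Y = pres_class A R v"
    by (metis carrier_pres_monoidE)
  then show "induced_hom N \<phi> X \<in> carrier N"
    and "induced_hom N \<phi> (X \<otimes>\<^bsub>pres_monoid A R\<^esub> Y) = induced_hom N \<phi> X \<otimes>\<^bsub>N\<^esub> induced_hom N \<phi> Y"
    by (simp_all add: induced_hom_class mult_pres_class eval_word_append[OF N \<phi>]
        eval_word_closed[OF N \<phi>])
qed

end

lemma monoid_iso_inv_into:
  assumes "monoid G" "h \<in> iso G H"
  shows "inv_into (carrier G) h \<in> iso H G"
proof -
  have h: "h \<in> hom G H" "bij_betw h (carrier G) (carrier H)"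
    using assms(2) by (auto simp: iso_def)
  then have inv: "bij_betw (inv_into (carrier G) h) (carrier H) (carrier G)"
    by (simp add: bij_betw_inv_into)
  then have closed: "inv_into (carrier G) h x \<in> carrier G" if "x \<in> carrier H" for x
    using that by (meson bij_betwE)
  have "inv_into (carrier G) h (x \<otimes>\<^bsub>H\<^esub> y) = inv_into (carrier G) h x \<otimes>\<^bsub>G\<^esub> inv_into (carrier G) h y"
    if "x \<in> carrier H" "y \<in> carrier H" for x y
  proof (rule inv_into_f_eq)
    show "inj_on h (carrier G)"
      using h(2) by (simp add: bij_betw_def)
    show "inv_into (carrier G) h x \<otimes>\<^bsub>G\<^esub> inv_into (carrier G) h y \<in> carrier G"
      by (simp add: closed that monoid.m_closed[OF assms(1)])
    show "h (inv_into (carrier G) h x \<otimes>\<^bsub>G\<^esub> inv_into (carrier G) h y) = x \<otimes>\<^bsub>H\<^esub> y"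
      using h that closed by (simp add: hom_mult bij_betw_inv_into_right)
  qed
  with inv closed show ?thesis
    by (auto simp: iso_def intro: homI)
qed

lemma monoid_iso_sym: "\<lbrakk>monoid G; G \<cong> H\<rbrakk> \<Longrightarrow> H \<cong> G"
  by (auto simp: is_iso_def dest: monoid_iso_inv_into)

lemma hom_one_if_surj:
  assumes "monoid G" "monoid H" "h \<in> hom G H" "h ` carrier G = carrier H"
  shows "h \<one>\<^bsub>G\<^esub> = \<one>\<^bsub>H\<^esub>"
proof -
  obtain y where y: "y \<in> carrier G" "h y = \<one>\<^bsub>H\<^esub>"
    using assms(4) monoid.one_closed[OF assms(2)] by (metis imageE)
  have "h \<one>\<^bsub>G\<^esub> \<in> carrier H"
    using assms(1,3) by (simp add: hom_in_carrier monoid.one_closed)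
  then have "h \<one>\<^bsub>G\<^esub> = h \<one>\<^bsub>G\<^esub> \<otimes>\<^bsub>H\<^esub> h y"
    using y assms(2) by (simp add: monoid.r_one)
  also have "\<dots> = h (\<one>\<^bsub>G\<^esub> \<otimes>\<^bsub>G\<^esub> y)"
    using hom_mult[OF assms(3) monoid.one_closed[OF assms(1)] y(1)] ..
  also have "\<dots> = \<one>\<^bsub>H\<^esub>"
    using y assms(1) by (simp add: monoid.l_one)
  finally show ?thesis .
qed

definition presentation ::
    "('m, 'e) monoid_scheme \<Rightarrow> 'a set \<Rightarrow> ('a list \<times> 'a list) set \<Rightarrow> ('a \<Rightarrow> 'm) \<Rightarrow> bool" where
  "presentation N B S f \<longleftrightarrow> f \<in> B \<rightarrow> carrier N
     \<and> (\<forall>m\<in>carrier N. \<exists>w\<in>lists B. eval_word N f w = m)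
     \<and> (\<forall>u\<in>lists B. \<forall>v\<in>lists B. eval_word N f u = eval_word N f v \<longleftrightarrow> (u, v) \<in> thue_cong B S)"

lemma presentation_funcset: "presentation N B S f \<Longrightarrow> f \<in> B \<rightarrow> carrier N"
  unfolding presentation_def by blast

lemma presentation_surj:
  assumes "presentation N B S f" "m \<in> carrier N"
  obtains w where "w \<in> lists B" "eval_word N f w = m"
  using assms unfolding presentation_def by blast

lemma presentation_eq_iff:
  "\<lbrakk>presentation N B S f; u \<in> lists B; v \<in> lists B\<rbrakk>
   \<Longrightarrow> eval_word N f u = eval_word N f v \<longleftrightarrow> (u, v) \<in> thue_cong B S"
  unfolding presentation_def by blast

lemma presentation_rule_eq:
  "\<lbrakk>presentation N B S f; (l, r) \<in> S; l \<in> lists B; r \<in> lists B\<rbrakk> \<Longrightarrow> eval_word N f l = eval_word N f r"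
  by (simp add: presentation_eq_iff rule_imp_thue_cong)

lemma presentation_if_iso:
  assumes N: "monoid N" and iso: "h \<in> iso N (pres_monoid B S)"
  shows "presentation N B S (\<lambda>b. inv_into (carrier N) h (pres_class B S [b]))"
proof -
  let ?P = "pres_monoid B S" and ?g = "inv_into (carrier N) h"
  have g: "?g \<in> iso ?P N"
    by (rule monoid_iso_inv_into[OF N iso])
  then have ghom: "?g \<in> hom ?P N" and gbij: "bij_betw ?g (carrier ?P) (carrier N)"
    by (simp_all add: iso_def)
  have "?g \<one>\<^bsub>?P\<^esub> = \<one>\<^bsub>N\<^esub>"
    using gbij by (intro hom_one_if_surj[OF monoid_pres_monoid N ghom]) (simp add: bij_betw_def)
  then have eval: "eval_word N (\<lambda>b. ?g (pres_class B S [b])) w = ?g (pres_class B S w)"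
    if "w \<in> lists B" for w
    using hom_eval_word[OF ghom _ monoid_pres_monoid, of "\<lambda>b. pres_class B S [b]" B w]
      eval_word_pres_class[of "\<lambda>a. a" w B S] that
    by (simp add: pres_class_in_carrier comp_def)
  show ?thesis
    unfolding presentation_def
  proof (intro conjI ballI)
    show "(\<lambda>b. ?g (pres_class B S [b])) \<in> B \<rightarrow> carrier N"
      using gbij pres_class_in_carrier[of "[_]" B S] by (auto dest: bij_betwE)
  next
    fix m assume m: "m \<in> carrier N"
    then have "h m \<in> carrier ?P"
      using iso by (auto simp: iso_def dest: hom_in_carrier)
    then obtain w where w: "w \<in> lists B" "h m = pres_class B S w"
      by (rule carrier_pres_monoidE)
    have "?g (h m) = m"
      using iso m by (intro inv_into_f_f) (simp_all add: iso_def bij_betw_def)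
    with w eval show "\<exists>w\<in>lists B. eval_word N (\<lambda>b. ?g (pres_class B S [b])) w = m"
      by metis
  next
    fix u v assume uv: "u \<in> lists B" "v \<in> lists B"
    have "inj_on ?g (carrier ?P)"
      using gbij by (simp add: bij_betw_def)
    then show "eval_word N (\<lambda>b. ?g (pres_class B S [b])) u = eval_word N (\<lambda>b. ?g (pres_class B S [b])) v
        \<longleftrightarrow> (u, v) \<in> thue_cong B S"
      using uv by (simp add: eval inj_on_eq_iff pres_class_in_carrier pres_class_eq_iff)
  qed
qed

lemma iso_if_presentation:
  assumes N: "monoid N" and pres: "presentation N B S f"
  shows "N \<cong> pres_monoid B S"
proof -
  let ?P = "pres_monoid B S"
  have f: "f \<in> B \<rightarrow> carrier N"
    using pres by (rule presentation_funcset)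
  have resp: "respects_rules N f B S"
    unfolding respects_rules_def using presentation_rule_eq[OF pres] by blast
  have hom: "induced_hom N f \<in> hom ?P N"
    by (rule induced_hom_hom[OF N f resp])
  have "inj_on (induced_hom N f) (carrier ?P)"
  proof (rule inj_onI)
    fix X Y assume "X \<in> carrier ?P" "Y \<in> carrier ?P" "induced_hom N f X = induced_hom N f Y"
    then show "X = Y"
      by (elim carrier_pres_monoidE) (simp add: induced_hom_class[OF N f resp]
          presentation_eq_iff[OF pres] pres_class_eq_iff)
  qed
  moreover have "carrier N \<subseteq> induced_hom N f ` carrier ?P"
  proof
    fix m assume "m \<in> carrier N"
    with pres obtain w where "w \<in> lists B" "eval_word N f w = m"
      by (rule presentation_surj)
    then show "m \<in> induced_hom N f ` carrier ?P"
      using pres_class_in_carrier induced_hom_class[OF N f resp] by (metis imageI)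
  qed
  ultimately have "induced_hom N f \<in> iso ?P N"
    using hom hom_carrier[OF hom] by (auto simp: iso_def bij_betw_def)
  then show ?thesis
    using monoid_iso_sym[OF monoid_pres_monoid] by (auto simp: is_iso_def)
qed

lemma iso_pres_monoid_iff_presentation:
  "monoid N \<Longrightarrow> N \<cong> pres_monoid B S \<longleftrightarrow> (\<exists>f. presentation N B S f)"
  using presentation_if_iso iso_if_presentation unfolding is_iso_def by blast

lemma FCRS_iff_presentation:
  "monoid N \<Longrightarrow> FCRS N \<longleftrightarrow> (\<exists>(B :: nat set) S f. finite B \<and> finite S \<and>
      S \<subseteq> lists B \<times> lists B \<and> complete_rs B S \<and> presentation N B S f)"
  unfolding FCRS_def by (simp add: iso_pres_monoid_iff_presentation)

lemma FCRS_iso: "\<lbrakk>monoid M; M \<cong> N; FCRS M\<rbrakk> \<Longrightarrow> FCRS N"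
  unfolding FCRS_def by (meson iso_trans monoid_iso_sym)

subsection \<open>Homogeneous monoids are graded\<close>

definition nat_add_monoid :: "nat monoid" where
  "nat_add_monoid = \<lparr>carrier = UNIV, mult = (+), one = 0\<rparr>"

lemma nat_add_monoid_simps [simp]:
  "carrier nat_add_monoid = UNIV" "mult nat_add_monoid = (+)" "one nat_add_monoid = 0"
  by (simp_all add: nat_add_monoid_def)

lemma monoid_nat_add_monoid: "monoid nat_add_monoid"
  by (rule monoidI) auto

lemma eval_word_nat_add_monoid: "eval_word nat_add_monoid \<phi> w = sum_list (map \<phi> w)"
  by (induction w) simp_all

lemma thue_cong_length:
  assumes "\<forall>(l, r) \<in> S. length l = length r" "(u, v) \<in> thue_cong B S"
  shows "length u = length v"
  using assms(2)
proof (rule thue_cong_invariant)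
  fix u v assume "(u, v) \<in> rstep B S"
  then show "length u = length v"
    by (rule rstepE) (use assms(1) in auto)
qed

lemma presentation_length_hom:
  assumes N: "monoid N" and pres: "presentation N B S f" and hom: "\<forall>(l, r) \<in> S. length l = length r"
  obtains len where "len \<in> hom N nat_add_monoid" "\<And>w. w \<in> lists B \<Longrightarrow> len (eval_word N f w) = length w"
proof -
  define len where "len m = length (SOME w. w \<in> lists B \<and> eval_word N f w = m)" for m
  have len_eval: "len (eval_word N f w) = length w" if w: "w \<in> lists B" for w
  proof -
    let ?w = "SOME w'. w' \<in> lists B \<and> eval_word N f w' = eval_word N f w"
    have "?w \<in> lists B \<and> eval_word N f ?w = eval_word N f w"
      by (rule someI[of _ w]) (simp add: w)
    then have "(?w, w) \<in> thue_cong B S"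
      using presentation_eq_iff[OF pres _ w] by blast
    then show ?thesis
      unfolding len_def by (rule thue_cong_length[OF hom])
  qed
  have "len \<in> hom N nat_add_monoid"
  proof (rule homI)
    fix x y assume "x \<in> carrier N" "y \<in> carrier N"
    obtain u where "u \<in> lists B" "eval_word N f u = x"
      using pres \<open>x \<in> carrier N\<close> by (rule presentation_surj)
    moreover obtain v where "v \<in> lists B" "eval_word N f v = y"
      using pres \<open>y \<in> carrier N\<close> by (rule presentation_surj)
    ultimately show "len (x \<otimes>\<^bsub>N\<^esub> y) = len x \<otimes>\<^bsub>nat_add_monoid\<^esub> len y"
      using len_eval[of "u @ v"] len_eval[of u] len_eval[of v]
        eval_word_append[OF N presentation_funcset[OF pres]]
      by simp
  qed simp
  with len_eval that show ?thesis
    by blast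
qed

lemma homogeneous_monoid_length:
  assumes N: "monoid N" and "homogeneous_monoid N"
  obtains len where "len \<in> hom N nat_add_monoid" "\<And>x. x \<in> carrier N \<Longrightarrow> len x = 0 \<longleftrightarrow> x = \<one>\<^bsub>N\<^esub>"
proof -
  obtain B :: "nat set" and S where hom: "\<forall>(u, v) \<in> S. length u = length v"
    and iso: "N \<cong> pres_monoid B S"
    using assms(2) unfolding homogeneous_monoid_def by blast
  obtain f where pres: "presentation N B S f"
    using iso iso_pres_monoid_iff_presentation[OF N] by blast
  obtain len where len: "len \<in> hom N nat_add_monoid"
    and len_eval: "\<And>w. w \<in> lists B \<Longrightarrow> len (eval_word N f w) = length w"
    using presentation_length_hom[OF N pres hom] by blast
  have "len x = 0 \<longleftrightarrow> x = \<one>\<^bsub>N\<^esub>" if x: "x \<in> carrier N" for x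
  proof -
    obtain w where w: "w \<in> lists B" "eval_word N f w = x"
      using pres x by (rule presentation_surj)
    have "len x = 0 \<longleftrightarrow> w = []"
      using len_eval[OF w(1)] w(2) by simp
    also have "\<dots> \<longleftrightarrow> x = \<one>\<^bsub>N\<^esub>"
      using w presentation_eq_iff[OF pres w(1), of "[]"] thue_cong_length[OF hom, of w "[]"]
      by auto
    finally show ?thesis .
  qed
  with len that show ?thesis
    by blast
qed

subsection \<open>Complete subsystems\<close>

lemma thue_cong_joinable:
  assumes "confluent A R" "(u, v) \<in> thue_cong A R"
  obtains z where "(u, z) \<in> (rstep A R)\<^sup>*" "(v, z) \<in> (rstep A R)\<^sup>*"
proof -
  let ?r = "rstep A R"
  have "(u, v) \<in> (?r \<union> ?r\<inverse>)\<^sup>*"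
    using assms(2) by (simp add: thue_cong_iff)
  then have "\<exists>z. (u, z) \<in> ?r\<^sup>* \<and> (v, z) \<in> ?r\<^sup>*"
  proof (induction rule: rtrancl_induct)
    case (step y w)
    then obtain z where z: "(u, z) \<in> ?r\<^sup>*" "(y, z) \<in> ?r\<^sup>*"
      by blast
    from step(2) show ?case
    proof
      assume "(y, w) \<in> ?r"
      then obtain z' where "(z, z') \<in> ?r\<^sup>*" "(w, z') \<in> ?r\<^sup>*"
        using assms(1) z(2) unfolding confluent_def by blast
      with z(1) show ?thesis
        by (meson rtrancl_trans)
    next
      assume "(y, w) \<in> ?r\<inverse>"
      with z show ?thesis
        by (meson converse_iff converse_rtrancl_into_rtrancl)
    qed
  qed blast
  with that show ?thesis
    by blast
qed

lemma joinable_imp_thue_cong: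
  "\<lbrakk>(u, z) \<in> (rstep A R)\<^sup>*; (v, z) \<in> (rstep A R)\<^sup>*; u \<in> lists A; v \<in> lists A\<rbrakk>
   \<Longrightarrow> (u, v) \<in> thue_cong A R"
  by (meson rtrancl_rstep_imp_thue_cong thue_cong_sym thue_cong_trans)

lemma rtrancl_rstep_subalphabet:
  assumes closed: "\<And>l r. \<lbrakk>(l, r) \<in> S; l \<in> lists B'\<rbrakk> \<Longrightarrow> r \<in> lists B'"
    and "(u, v) \<in> (rstep B S)\<^sup>*" "u \<in> lists B'"
  shows "(u, v) \<in> (rstep B' (S \<inter> (lists B' \<times> lists B')))\<^sup>*"
  using assms(2)
proof (induction rule: rtrancl_induct)
  case (step y z)
  have y: "y \<in> lists B'"
    using rtrancl_rstep_lists[OF step.IH assms(3)] .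
  obtain x l r w where "y = x @ l @ w" "z = x @ r @ w" "(l, r) \<in> S"
    using step(2) by (rule rstepE)
  moreover have "r \<in> lists B'"
    using closed calculation(1,3) y by simp
  ultimately have "(y, z) \<in> rstep B' (S \<inter> (lists B' \<times> lists B'))"
    using y rstepI[of l r _ x B' w] by simp
  with step.IH show ?case
    by (rule rtrancl_into_rtrancl)
qed simp

lemma complete_subsystem:
  assumes comp: "complete_rs B S" and sub: "B' \<subseteq> B"
    and closed: "\<And>l r. \<lbrakk>(l, r) \<in> S; l \<in> lists B'\<rbrakk> \<Longrightarrow> r \<in> lists B'"
  defines "S' \<equiv> S \<inter> (lists B' \<times> lists B')"
  shows "complete_rs B' S'"
    and "\<lbrakk>u \<in> lists B'; v \<in> lists B'; (u, v) \<in> thue_cong B S\<rbrakk> \<Longrightarrow> (u, v) \<in> thue_cong B' S'"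
proof -
  have mono: "rstep B' S' \<subseteq> rstep B S"
    unfolding S'_def by (rule rstep_mono[OF sub]) blast
  have downs: "(u, v) \<in> (rstep B' S')\<^sup>*" if "(u, v) \<in> (rstep B S)\<^sup>*" "u \<in> lists B'" for u v
    unfolding S'_def by (rule rtrancl_rstep_subalphabet[OF closed that])
  have noeth: "noetherian B' S'"
    using comp mono unfolding complete_rs_def noetherian_def
    by (meson converse_mono wf_subset)
  have "confluent B' S'"
    unfolding confluent_def
  proof (intro allI impI)
    fix w u v assume wuv: "(w, u) \<in> (rstep B' S')\<^sup>* \<and> (w, v) \<in> (rstep B' S')\<^sup>*"
    show "\<exists>z. (u, z) \<in> (rstep B' S')\<^sup>* \<and> (v, z) \<in> (rstep B' S')\<^sup>*"
    proof (cases "w \<in> lists B'")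
      case False
      with wuv have "u = w" "v = w"
        by (metis converse_rtranclE rstep_lists)+
      then show ?thesis
        by blast
    next
      case True
      obtain z where "(u, z) \<in> (rstep B S)\<^sup>*" "(v, z) \<in> (rstep B S)\<^sup>*"
        using comp wuv rtrancl_mono[OF mono] unfolding complete_rs_def confluent_def by blast
      moreover have "u \<in> lists B'" "v \<in> lists B'"
        using wuv True rtrancl_rstep_lists by blast+
      ultimately show ?thesis
        using downs by blast
    qed
  qed
  with noeth show "complete_rs B' S'"
    by (simp add: complete_rs_def)
  assume uv: "u \<in> lists B'" "v \<in> lists B'" "(u, v) \<in> thue_cong B S"
  obtain z where "(u, z) \<in> (rstep B S)\<^sup>*" "(v, z) \<in> (rstep B S)\<^sup>*"
    using comp uv(3) unfolding complete_rs_def by (blast elim: thue_cong_joinable)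
  then show "(u, v) \<in> thue_cong B' S'"
    using joinable_imp_thue_cong downs uv(1,2) by blast
qed

lemma hom_nat_add_monoid_one:
  assumes "monoid M" "L \<in> hom M nat_add_monoid"
  shows "L \<one>\<^bsub>M\<^esub> = 0"
  using hom_mult[OF assms(2), of "\<one>\<^bsub>M\<^esub>" "\<one>\<^bsub>M\<^esub>"] monoid.one_closed[OF assms(1)]
  by (simp add: monoid.l_one[OF assms(1)])

lemma hom_nat_add_monoid_eval_word_eq_0:
  assumes "monoid M" "L \<in> hom M nat_add_monoid" "f \<in> B \<rightarrow> carrier M" "w \<in> lists B"
  shows "L (eval_word M f w) = 0 \<longleftrightarrow> (\<forall>b\<in>set w. L (f b) = 0)"
  using hom_eval_word[OF assms(2) _ assms(1,3,4)] hom_nat_add_monoid_one[OF assms(1,2)]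
  by (simp add: eval_word_nat_add_monoid)

lemma presentation_degree_zero_closed:
  assumes P: "monoid P" and L: "L \<in> hom P nat_add_monoid"
    and pres: "presentation P B S f" and S: "S \<subseteq> lists B \<times> lists B"
    and rule: "(l, r) \<in> S" and l: "l \<in> lists {b \<in> B. L (f b) = 0}"
  shows "r \<in> lists {b \<in> B. L (f b) = 0}"
proof -
  have lr: "l \<in> lists B" "r \<in> lists B"
    using S rule by auto
  note degree = hom_nat_add_monoid_eval_word_eq_0[OF P L presentation_funcset[OF pres]]
  show ?thesis
    using l lr degree[OF lr(1)] degree[OF lr(2)] presentation_rule_eq[OF pres rule lr] by auto
qed

text \<open>
  A monoid \<open>N\<close> that is the degree-zero part of a graded monoid \<open>P\<close>, in the sense that \<open>io\<close>
  embeds \<open>N\<close> onto the elements of degree \<open>0\<close> and \<open>rh\<close> retracts them, is presented by the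
  generators of degree \<open>0\<close>: rewriting preserves the degree, so the complete system for \<open>P\<close>
  cannot leave the words over them.
\<close>

lemma presentation_degree_zero:
  assumes P: "monoid P" and N: "monoid N"
    and rh: "rh \<in> hom P N" and L: "L \<in> hom P nat_add_monoid"
    and io: "\<And>m. m \<in> carrier N \<Longrightarrow> io m \<in> carrier P \<and> rh (io m) = m \<and> L (io m) = 0"
    and retract: "\<And>X. \<lbrakk>X \<in> carrier P; L X = 0\<rbrakk> \<Longrightarrow> X = io (rh X)"
    and pres: "presentation P B S f" and S: "S \<subseteq> lists B \<times> lists B" and comp: "complete_rs B S"
  defines "B' \<equiv> {b \<in> B. L (f b) = 0}"
  defines "S' \<equiv> S \<inter> (lists B' \<times> lists B')"
  shows "presentation N B' S' (rh \<circ> f)" and "complete_rs B' S'"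
proof -
  have f: "f \<in> B \<rightarrow> carrier P"
    using pres by (rule presentation_funcset)
  have B': "B' \<subseteq> B"
    unfolding B'_def by blast
  have degree_zero: "L (eval_word P f w) = 0 \<longleftrightarrow> w \<in> lists B'" if w: "w \<in> lists B" for w
    using w hom_nat_add_monoid_eval_word_eq_0[OF P L f w] by (auto simp: B'_def)
  have closed: "r \<in> lists B'" if "(l, r) \<in> S" "l \<in> lists B'" for l r
    using presentation_degree_zero_closed[OF P L pres S that(1)] that(2) by (simp add: B'_def)
  show "complete_rs B' S'"
    unfolding S'_def by (rule complete_subsystem(1)[OF comp B' closed])
  have rh_one: "rh \<one>\<^bsub>P\<^esub> = \<one>\<^bsub>N\<^esub>"
    using io hom_carrier[OF rh] by (intro hom_one_if_surj[OF P N rh]) force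
  have rh_eval: "rh (eval_word P f w) = eval_word N (rh \<circ> f) w" if "w \<in> lists B" for w
    by (rule hom_eval_word[OF rh rh_one P f that])
  show "presentation N B' S' (rh \<circ> f)"
    unfolding presentation_def
  proof (intro conjI ballI)
    show "rh \<circ> f \<in> B' \<rightarrow> carrier N"
      using f B' by (auto intro!: hom_in_carrier[OF rh])
  next
    fix m assume m: "m \<in> carrier N"
    obtain w where w: "w \<in> lists B" "eval_word P f w = io m"
      using pres conjunct1[OF io[OF m]] by (rule presentation_surj)
    then have "w \<in> lists B'" "eval_word N (rh \<circ> f) w = m"
      using io[OF m] degree_zero[OF w(1)] rh_eval[OF w(1)] by simp_all
    then show "\<exists>w\<in>lists B'. eval_word N (rh \<circ> f) w = m"
      by blast
  next
    fix u v assume u: "u \<in> lists B'" and v: "v \<in> lists B'"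
    then have uv: "u \<in> lists B" "v \<in> lists B"
      using lists_mono[OF B'] by auto
    have "eval_word P f w = io (eval_word N (rh \<circ> f) w)" if "w \<in> lists B'" "w \<in> lists B" for w
      using retract[OF eval_word_closed[OF P f that(2)]] degree_zero[OF that(2)] rh_eval[OF that(2)]
        that(1) by simp
    then have "eval_word N (rh \<circ> f) u = eval_word N (rh \<circ> f) v \<longleftrightarrow> eval_word P f u = eval_word P f v"
      using u v uv rh_eval by metis
    also have "\<dots> \<longleftrightarrow> (u, v) \<in> thue_cong B S"
      by (rule presentation_eq_iff[OF pres uv])
    also have "\<dots> \<longleftrightarrow> (u, v) \<in> thue_cong B' S'"
      using complete_subsystem(2)[OF comp B' closed u v] thue_cong_mono[OF B', of S' S]
      by (auto simp: S'_def)
    finally show "eval_word N (rh \<circ> f) u = eval_word N (rh \<circ> f) v \<longleftrightarrow> (u, v) \<in> thue_cong B' S'" .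
  qed
qed

lemma FCRS_degree_zero_retract:
  assumes P: "monoid P" and N: "monoid N" and "FCRS P"
    and rh: "rh \<in> hom P N" and L: "L \<in> hom P nat_add_monoid"
    and io: "\<And>m. m \<in> carrier N \<Longrightarrow> io m \<in> carrier P \<and> rh (io m) = m \<and> L (io m) = 0"
    and retract: "\<And>X. \<lbrakk>X \<in> carrier P; L X = 0\<rbrakk> \<Longrightarrow> X = io (rh X)"
  shows "FCRS N"
proof -
  obtain B :: "nat set" and S f where fin: "finite B" "finite S" and S: "S \<subseteq> lists B \<times> lists B"
    and comp: "complete_rs B S" and pres: "presentation P B S f"
    using \<open>FCRS P\<close> unfolding FCRS_iff_presentation[OF P] by blast
  let ?B' = "{b \<in> B. L (f b) = 0}"
  let ?S' = "S \<inter> (lists ?B' \<times> lists ?B')"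
  note degree_zero = presentation_degree_zero[OF P N rh L io retract pres S comp]
  have "finite ?B'" "finite ?S'" "?S' \<subseteq> lists ?B' \<times> lists ?B'"
    using fin by auto
  with degree_zero show ?thesis
    unfolding FCRS_iff_presentation[OF N] by blast
qed

subsection \<open>The free product\<close>

definition fp_gens :: "('a, 'e1) monoid_scheme \<Rightarrow> ('b, 'e2) monoid_scheme \<Rightarrow> ('a + 'b) set" where
  "fp_gens M1 M2 = Inl ` carrier M1 \<union> Inr ` carrier M2"

definition fp_rels ::
    "('a, 'e1) monoid_scheme \<Rightarrow> ('b, 'e2) monoid_scheme \<Rightarrow> (('a + 'b) list \<times> ('a + 'b) list) set" where
  "fp_rels M1 M2 = {([Inl x, Inl y], [Inl (x \<otimes>\<^bsub>M1\<^esub> y)]) | x y. x \<in> carrier M1 \<and> y \<in> carrier M1}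
      \<union> {([Inl \<one>\<^bsub>M1\<^esub>], [])}
      \<union> {([Inr x, Inr y], [Inr (x \<otimes>\<^bsub>M2\<^esub> y)]) | x y. x \<in> carrier M2 \<and> y \<in> carrier M2}
      \<union> {([Inr \<one>\<^bsub>M2\<^esub>], [])}"

abbreviation fp_class :: "('a, 'e1) monoid_scheme \<Rightarrow> ('b, 'e2) monoid_scheme \<Rightarrow> ('a + 'b) list \<Rightarrow> ('a + 'b) list set" where
  "fp_class M1 M2 w \<equiv> pres_class (fp_gens M1 M2) (fp_rels M1 M2) w"

lemma free_product_eq: "free_product M1 M2 = pres_monoid (fp_gens M1 M2) (fp_rels M1 M2)"
  unfolding free_product_def fp_gens_def fp_rels_def ..

lemma fp_gens_iff [simp]:
  "Inl x \<in> fp_gens M1 M2 \<longleftrightarrow> x \<in> carrier M1" "Inr y \<in> fp_gens M1 M2 \<longleftrightarrow> y \<in> carrier M2"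
  unfolding fp_gens_def by auto

lemma fp_relsE:
  assumes "(l, r) \<in> fp_rels M1 M2"
  obtains (Inl_mult) x y where "x \<in> carrier M1" "y \<in> carrier M1" "l = [Inl x, Inl y]" "r = [Inl (x \<otimes>\<^bsub>M1\<^esub> y)]"
    | (Inl_one) "l = [Inl \<one>\<^bsub>M1\<^esub>]" "r = []"
    | (Inr_mult) x y where "x \<in> carrier M2" "y \<in> carrier M2" "l = [Inr x, Inr y]" "r = [Inr (x \<otimes>\<^bsub>M2\<^esub> y)]"
    | (Inr_one) "l = [Inr \<one>\<^bsub>M2\<^esub>]" "r = []"
  using assms unfolding fp_rels_def by blast

lemma monoid_free_product: "monoid (free_product M1 M2)"
  by (simp add: free_product_eq monoid_pres_monoid)

definition fp_inl :: "('a, 'e1) monoid_scheme \<Rightarrow> ('b, 'e2) monoid_scheme \<Rightarrow> 'a \<Rightarrow> ('a + 'b) list set" where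
  "fp_inl M1 M2 x = fp_class M1 M2 [Inl x]"

definition fp_inr :: "('a, 'e1) monoid_scheme \<Rightarrow> ('b, 'e2) monoid_scheme \<Rightarrow> 'b \<Rightarrow> ('a + 'b) list set" where
  "fp_inr M1 M2 y = fp_class M1 M2 [Inr y]"

context
  fixes M1 :: "('a, 'e1) monoid_scheme" and M2 :: "('b, 'e2) monoid_scheme"
begin

lemma fp_inl_hom:
  assumes "monoid M1"
  shows "fp_inl M1 M2 \<in> hom M1 (free_product M1 M2)"
proof (rule homI)
  fix x y assume xy: "x \<in> carrier M1" "y \<in> carrier M1"
  then have "([Inl x, Inl y], [Inl (x \<otimes>\<^bsub>M1\<^esub> y)]) \<in> thue_cong (fp_gens M1 M2) (fp_rels M1 M2)"
    by (intro rule_imp_thue_cong) (auto simp: fp_rels_def monoid.m_closed[OF assms])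
  with xy show "fp_inl M1 M2 (x \<otimes>\<^bsub>M1\<^esub> y) = fp_inl M1 M2 x \<otimes>\<^bsub>free_product M1 M2\<^esub> fp_inl M1 M2 y"
    by (simp add: fp_inl_def free_product_eq mult_pres_class pres_class_eq_iff thue_cong_sym
        monoid.m_closed[OF assms])
qed (simp add: fp_inl_def free_product_eq pres_class_in_carrier)

lemma fp_inl_one:
  assumes "monoid M1"
  shows "fp_inl M1 M2 \<one>\<^bsub>M1\<^esub> = \<one>\<^bsub>free_product M1 M2\<^esub>"
proof -
  have "([Inl \<one>\<^bsub>M1\<^esub>], []) \<in> thue_cong (fp_gens M1 M2) (fp_rels M1 M2)"
    by (intro rule_imp_thue_cong) (auto simp: fp_rels_def monoid.one_closed[OF assms])
  then show ?thesis
    by (simp add: fp_inl_def free_product_eq one_pres_monoid pres_class_eq_iff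
        monoid.one_closed[OF assms])
qed

lemma fp_inr_hom:
  assumes "monoid M2"
  shows "fp_inr M1 M2 \<in> hom M2 (free_product M1 M2)"
proof (rule homI)
  fix x y assume xy: "x \<in> carrier M2" "y \<in> carrier M2"
  then have "([Inr x, Inr y], [Inr (x \<otimes>\<^bsub>M2\<^esub> y)]) \<in> thue_cong (fp_gens M1 M2) (fp_rels M1 M2)"
    by (intro rule_imp_thue_cong) (auto simp: fp_rels_def monoid.m_closed[OF assms])
  with xy show "fp_inr M1 M2 (x \<otimes>\<^bsub>M2\<^esub> y) = fp_inr M1 M2 x \<otimes>\<^bsub>free_product M1 M2\<^esub> fp_inr M1 M2 y"
    by (simp add: fp_inr_def free_product_eq mult_pres_class pres_class_eq_iff thue_cong_sym
        monoid.m_closed[OF assms])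
qed (simp add: fp_inr_def free_product_eq pres_class_in_carrier)

lemma fp_inr_one:
  assumes "monoid M2"
  shows "fp_inr M1 M2 \<one>\<^bsub>M2\<^esub> = \<one>\<^bsub>free_product M1 M2\<^esub>"
proof -
  have "([Inr \<one>\<^bsub>M2\<^esub>], []) \<in> thue_cong (fp_gens M1 M2) (fp_rels M1 M2)"
    by (intro rule_imp_thue_cong) (auto simp: fp_rels_def monoid.one_closed[OF assms])
  then show ?thesis
    by (simp add: fp_inr_def free_product_eq one_pres_monoid pres_class_eq_iff
        monoid.one_closed[OF assms])
qed

definition fp_lift :: "('c, 'd) monoid_scheme \<Rightarrow> ('a \<Rightarrow> 'c) \<Rightarrow> ('b \<Rightarrow> 'c) \<Rightarrow> ('a + 'b) list set \<Rightarrow> 'c" where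
  "fp_lift N h1 h2 = induced_hom N (case_sum h1 h2)"

context
  fixes N :: "('c, 'd) monoid_scheme" and h1 h2
  assumes N: "monoid N"
    and h1: "h1 \<in> hom M1 N" "h1 \<one>\<^bsub>M1\<^esub> = \<one>\<^bsub>N\<^esub>"
    and h2: "h2 \<in> hom M2 N" "h2 \<one>\<^bsub>M2\<^esub> = \<one>\<^bsub>N\<^esub>"
begin

lemma case_sum_funcset: "case_sum h1 h2 \<in> fp_gens M1 M2 \<rightarrow> carrier N"
  using hom_in_carrier[OF h1(1)] hom_in_carrier[OF h2(1)] by (auto simp: fp_gens_def)

lemma respects_fp_rels: "respects_rules N (case_sum h1 h2) (fp_gens M1 M2) (fp_rels M1 M2)"
  unfolding respects_rules_def
proof (intro allI impI)
  fix l r assume "(l, r) \<in> fp_rels M1 M2"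
  then show "eval_word N (case_sum h1 h2) l = eval_word N (case_sum h1 h2) r"
    by (cases rule: fp_relsE)
      (simp_all add: h1 h2 hom_mult[OF h1(1)] hom_mult[OF h2(1)] hom_in_carrier[OF h1(1)]
        hom_in_carrier[OF h2(1)] monoid.r_one[OF N] monoid.m_closed[OF N] monoid.one_closed[OF N])
qed

lemma fp_lift_hom: "fp_lift N h1 h2 \<in> hom (free_product M1 M2) N"
  unfolding fp_lift_def free_product_eq
  by (rule induced_hom_hom[OF N case_sum_funcset respects_fp_rels])

lemma fp_lift_class:
  "w \<in> lists (fp_gens M1 M2) \<Longrightarrow> fp_lift N h1 h2 (fp_class M1 M2 w) = eval_word N (case_sum h1 h2) w"
  unfolding fp_lift_def by (rule induced_hom_class[OF N case_sum_funcset respects_fp_rels])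

lemma fp_lift_one: "fp_lift N h1 h2 \<one>\<^bsub>free_product M1 M2\<^esub> = \<one>\<^bsub>N\<^esub>"
  using fp_lift_class[of "[]"] by (simp add: free_product_eq one_pres_monoid)

lemma fp_lift_inl: "x \<in> carrier M1 \<Longrightarrow> fp_lift N h1 h2 (fp_inl M1 M2 x) = h1 x"
  using fp_lift_class[of "[Inl x]"] hom_in_carrier[OF h1(1)] by (simp add: fp_inl_def monoid.r_one[OF N])

lemma fp_lift_inr: "y \<in> carrier M2 \<Longrightarrow> fp_lift N h1 h2 (fp_inr M1 M2 y) = h2 y"
  using fp_lift_class[of "[Inr y]"] hom_in_carrier[OF h2(1)] by (simp add: fp_inr_def monoid.r_one[OF N])

end

lemma fp_class_eq_fp_inl:
  assumes M1: "monoid M1" and M2: "monoid M2"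
    and "w \<in> lists (fp_gens M1 M2)" "\<And>y. Inr y \<in> set w \<Longrightarrow> y = \<one>\<^bsub>M2\<^esub>"
  shows "fp_class M1 M2 w = fp_inl M1 M2 (eval_word M1 (case_sum (\<lambda>x. x) (\<lambda>_. \<one>\<^bsub>M1\<^esub>)) w)"
  using assms(3,4)
proof (induction w rule: lists.induct)
  case Nil
  then show ?case
    using fp_inl_one[OF M1] by (simp add: free_product_eq one_pres_monoid)
next
  case (Cons a w)
  let ?e = "eval_word M1 (case_sum (\<lambda>x. x) (\<lambda>_. \<one>\<^bsub>M1\<^esub>)) w"
  have e: "?e \<in> carrier M1"
    using Cons.hyps(2)
    by (intro eval_word_closed[OF M1]) (auto simp: fp_gens_def monoid.one_closed[OF M1])
  have split: "fp_class M1 M2 (a # w) = fp_class M1 M2 [a] \<otimes>\<^bsub>free_product M1 M2\<^esub> fp_class M1 M2 w"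
    unfolding free_product_eq using Cons.hyps by (rule pres_class_Cons)
  show ?case
  proof (cases a)
    case (Inl x)
    then have x: "x \<in> carrier M1"
      using Cons.hyps by simp
    have "fp_class M1 M2 (a # w) = fp_inl M1 M2 x \<otimes>\<^bsub>free_product M1 M2\<^esub> fp_inl M1 M2 ?e"
      unfolding split using Inl Cons.IH Cons.prems by (simp add: fp_inl_def)
    also have "\<dots> = fp_inl M1 M2 (x \<otimes>\<^bsub>M1\<^esub> ?e)"
      by (rule hom_mult[OF fp_inl_hom[OF M1] x e, symmetric])
    finally show ?thesis
      using Inl by simp
  next
    case (Inr y)
    then have y: "y = \<one>\<^bsub>M2\<^esub>"
      using Cons.prems by simp
    have w: "fp_class M1 M2 w \<in> carrier (free_product M1 M2)"
      using Cons.hyps by (simp add: free_product_eq pres_class_in_carrier)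
    have "fp_class M1 M2 (a # w) = \<one>\<^bsub>free_product M1 M2\<^esub> \<otimes>\<^bsub>free_product M1 M2\<^esub> fp_class M1 M2 w"
      unfolding split using Inr y fp_inr_one[OF M2] by (simp add: fp_inr_def)
    also have "\<dots> = fp_inl M1 M2 ?e"
      using Cons.IH Cons.prems w by (simp add: monoid.l_one[OF monoid_free_product])
    finally show ?thesis
      using Inr e by (simp add: monoid.l_one[OF M1])
  qed
qed

end

lemma map_swap_in_lists_fp_gens:
  "w \<in> lists (fp_gens M1 M2) \<Longrightarrow> map (case_sum Inr Inl) w \<in> lists (fp_gens M2 M1)"
  by (induction w) (auto split: sum.split)

lemma fp_lift_swap_class:
  fixes M1 :: "('a, 'e1) monoid_scheme" and M2 :: "('b, 'e2) monoid_scheme"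
  assumes M1: "monoid M1" and M2: "monoid M2" and w: "w \<in> lists (fp_gens M1 M2)"
  shows "fp_lift (free_product M2 M1) (fp_inr M2 M1) (fp_inl M2 M1) (fp_class M1 M2 w)
    = fp_class M2 M1 (map (case_sum Inr Inl) w)"
proof -
  have "case_sum (fp_inr M2 M1) (fp_inl M2 M1) = (\<lambda>a. fp_class M2 M1 [case_sum Inr Inl a])"
    by (rule ext) (simp add: fp_inl_def fp_inr_def split: sum.split)
  moreover have "map (case_sum Inr Inl) w \<in> lists (fp_gens M2 M1)"
    using w by (rule map_swap_in_lists_fp_gens)
  moreover have "fp_lift (free_product M2 M1) (fp_inr M2 M1) (fp_inl M2 M1) (fp_class M1 M2 w)
      = eval_word (free_product M2 M1) (case_sum (fp_inr M2 M1) (fp_inl M2 M1)) w"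
    by (rule fp_lift_class[OF monoid_free_product fp_inr_hom[OF M1] fp_inr_one[OF M1]
          fp_inl_hom[OF M2] fp_inl_one[OF M2] w])
  ultimately show ?thesis
    by (simp add: free_product_eq eval_word_pres_class)
qed

lemma free_product_commute:
  assumes M1: "monoid M1" and M2: "monoid M2"
  shows "free_product M1 M2 \<cong> free_product M2 M1"
proof -
  let ?swap = "case_sum Inr Inl" and ?P = "free_product M1 M2" and ?Q = "free_product M2 M1"
  let ?f = "fp_lift ?Q (fp_inr M2 M1) (fp_inl M2 M1)" and ?g = "fp_lift ?P (fp_inr M1 M2) (fp_inl M1 M2)"
  have f: "?f \<in> hom ?P ?Q"
    by (rule fp_lift_hom[OF monoid_free_product fp_inr_hom[OF M1] fp_inr_one[OF M1]
          fp_inl_hom[OF M2] fp_inl_one[OF M2]])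
  have g: "?g \<in> hom ?Q ?P"
    by (rule fp_lift_hom[OF monoid_free_product fp_inr_hom[OF M2] fp_inr_one[OF M2]
          fp_inl_hom[OF M1] fp_inl_one[OF M1]])
  have swap_swap: "?swap \<circ> ?swap = (\<lambda>x. x)"
    by (rule ext) (simp split: sum.split)
  have "bij_betw ?f (carrier ?P) (carrier ?Q)"
  proof (rule bij_betw_byWitness[where f' = ?g])
    show "\<forall>X\<in>carrier ?P. ?g (?f X) = X"
    proof
      fix X assume "X \<in> carrier ?P"
      then obtain w where "w \<in> lists (fp_gens M1 M2)" "X = fp_class M1 M2 w"
        unfolding free_product_eq by (rule carrier_pres_monoidE)
      then show "?g (?f X) = X"
        by (simp add: fp_lift_swap_class[OF M1 M2] fp_lift_swap_class[OF M2 M1] map_swap_in_lists_fp_gens swap_swap)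
    qed
    show "\<forall>Y\<in>carrier ?Q. ?f (?g Y) = Y"
    proof
      fix Y assume "Y \<in> carrier ?Q"
      then obtain w where "w \<in> lists (fp_gens M2 M1)" "Y = fp_class M2 M1 w"
        unfolding free_product_eq by (rule carrier_pres_monoidE)
      then show "?f (?g Y) = Y"
        by (simp add: fp_lift_swap_class[OF M1 M2] fp_lift_swap_class[OF M2 M1] map_swap_in_lists_fp_gens swap_swap)
    qed
    show "?f ` carrier ?P \<subseteq> carrier ?Q" "?g ` carrier ?Q \<subseteq> carrier ?P"
      using hom_carrier[OF f] hom_carrier[OF g] .
  qed
  with f show ?thesis
    unfolding is_iso_def iso_def by blast
qed

text \<open>
  Generators of \<open>M2\<close> have positive degree in a homogeneous presentation, so the elements of
  degree \<open>0\<close> of the free product are exactly the copy of \<open>M1\<close>.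
\<close>

lemma FCRS_free_product_factor:
  fixes M1 :: "('a, 'e1) monoid_scheme" and M2 :: "('b, 'e2) monoid_scheme"
  assumes M1: "monoid M1" and M2: "monoid M2" and "homogeneous_monoid M2"
    and "FCRS (free_product M1 M2)"
  shows "FCRS M1"
proof -
  obtain len where len: "len \<in> hom M2 nat_add_monoid"
    and len_zero: "\<And>y. y \<in> carrier M2 \<Longrightarrow> len y = 0 \<longleftrightarrow> y = \<one>\<^bsub>M2\<^esub>"
    using homogeneous_monoid_length[OF M2 \<open>homogeneous_monoid M2\<close>] by blast
  let ?P = "free_product M1 M2"
  let ?rh = "fp_lift M1 (\<lambda>x. x) (\<lambda>_. \<one>\<^bsub>M1\<^esub>)" and ?L = "fp_lift nat_add_monoid (\<lambda>_. 0) len"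
  have id: "(\<lambda>x. x) \<in> hom M1 M1" and one: "(\<lambda>_. \<one>\<^bsub>M1\<^esub>) \<in> hom M2 M1"
    by (auto intro!: homI simp: monoid.one_closed[OF M1] monoid.l_one[OF M1])
  have zero: "(\<lambda>_. 0) \<in> hom M1 nat_add_monoid"
    by (auto intro: homI)
  have len_one: "len \<one>\<^bsub>M2\<^esub> = 0"
    using len_zero monoid.one_closed[OF M2] by blast
  note rh = fp_lift_hom[OF M1 id _ one] fp_lift_class[OF M1 id _ one]
  note L = fp_lift_hom[OF monoid_nat_add_monoid zero _ len] fp_lift_class[OF monoid_nat_add_monoid zero _ len]
  show ?thesis
  proof (rule FCRS_degree_zero_retract[OF monoid_free_product M1 \<open>FCRS ?P\<close>])
    show "?rh \<in> hom ?P M1" "?L \<in> hom ?P nat_add_monoid"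
      using rh(1) L(1) len_one by simp_all
  next
    fix m assume m: "m \<in> carrier M1"
    then show "fp_inl M1 M2 m \<in> carrier ?P \<and> ?rh (fp_inl M1 M2 m) = m \<and> ?L (fp_inl M1 M2 m) = 0"
      using rh(2) L(2) len_one
      by (simp add: fp_inl_def free_product_eq pres_class_in_carrier monoid.r_one[OF M1])
  next
    fix X assume X: "X \<in> carrier ?P" "?L X = 0"
    obtain w where w: "w \<in> lists (fp_gens M1 M2)" "X = fp_class M1 M2 w"
      using X(1) unfolding free_product_eq by (rule carrier_pres_monoidE)
    with X(2) have "eval_word nat_add_monoid (case_sum (\<lambda>_. 0) len) w = 0"
      using L(2) len_one by simp
    then have "y = \<one>\<^bsub>M2\<^esub>" if "Inr y \<in> set w" for y
      using that w(1) len_zero by (fastforce simp: eval_word_nat_add_monoid)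
    then have "X = fp_inl M1 M2 (eval_word M1 (case_sum (\<lambda>x. x) (\<lambda>_. \<one>\<^bsub>M1\<^esub>)) w)"
      using w by (simp add: fp_class_eq_fp_inl[OF M1 M2])
    moreover have "?rh X = eval_word M1 (case_sum (\<lambda>x. x) (\<lambda>_. \<one>\<^bsub>M1\<^esub>)) w"
      using w rh(2) len_one by simp
    ultimately show "X = fp_inl M1 M2 (?rh X)"
      by simp
  qed
qed

subsection \<open>Complete systems over disjoint alphabets\<close>

lemma newman:
  assumes wf: "wf (r\<inverse>)"
    and local_conf: "\<And>a b c. \<lbrakk>(a, b) \<in> r; (a, c) \<in> r\<rbrakk> \<Longrightarrow> \<exists>d. (b, d) \<in> r\<^sup>* \<and> (c, d) \<in> r\<^sup>*"
  shows "\<lbrakk>(a, b) \<in> r\<^sup>*; (a, c) \<in> r\<^sup>*\<rbrakk> \<Longrightarrow> \<exists>d. (b, d) \<in> r\<^sup>* \<and> (c, d) \<in> r\<^sup>*"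
proof (induction a arbitrary: b c rule: wf_induct_rule[OF wf])
  case (1 a)
  show ?case
  proof (cases "a = b \<or> a = c")
    case True
    with "1.prems" show ?thesis
      by blast
  next
    case False
    obtain b1 where b1: "(a, b1) \<in> r" "(b1, b) \<in> r\<^sup>*"
      using "1.prems"(1) False by (meson converse_rtranclE)
    obtain c1 where c1: "(a, c1) \<in> r" "(c1, c) \<in> r\<^sup>*"
      using "1.prems"(2) False by (meson converse_rtranclE)
    obtain d where d: "(b1, d) \<in> r\<^sup>*" "(c1, d) \<in> r\<^sup>*"
      using local_conf[OF b1(1) c1(1)] by blast
    obtain e where e: "(b, e) \<in> r\<^sup>*" "(d, e) \<in> r\<^sup>*"
      using "1.IH"[of b1 b d] b1 d by blast
    obtain g where "(c, g) \<in> r\<^sup>*" "(e, g) \<in> r\<^sup>*"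
      using "1.IH"[of c1 c e] c1 d(2) e(2) by (meson converse_iff rtrancl_trans)
    with e(1) show ?thesis
      by (meson rtrancl_trans)
  qed
qed

lemma noetherian_lhs_nonempty:
  assumes "noetherian B S" "(l, r) \<in> S" "l \<in> lists B" "r \<in> lists B"
  shows "l \<noteq> []"
proof
  assume l: "l = []"
  define f where "f n = concat (replicate n r)" for n
  have "f n \<in> lists B" for n
    unfolding f_def using assms(4) by (induction n) auto
  then have "(f n, f (Suc n)) \<in> rstep B S" for n
    using rstepI[OF assms(2), of "[]" B "f n"] assms(3,4) l by (simp add: f_def)
  then show False
    using assms(1) unfolding noetherian_def wf_iff_no_infinite_down_chain by auto
qed

text \<open>Letters of the \<open>i\<close>-th alphabet are encoded as the numbers congruent to \<open>i\<close> mod \<open>2\<close>.\<close>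

definition tag :: "nat \<Rightarrow> nat \<Rightarrow> nat" where
  "tag i b = 2 * b + i"

definition tagged_alphabet :: "(nat \<Rightarrow> nat set) \<Rightarrow> nat set" where
  "tagged_alphabet BB = {tag i b | i b. i < 2 \<and> b \<in> BB i}"

definition tagged_rules :: "(nat \<Rightarrow> (nat list \<times> nat list) set) \<Rightarrow> (nat list \<times> nat list) set" where
  "tagged_rules SS = {(map (tag i) l, map (tag i) r) | i l r. i < 2 \<and> (l, r) \<in> SS i}"

definition untag :: "nat \<Rightarrow> nat list \<Rightarrow> nat list" where
  "untag i w = map (\<lambda>n. n div 2) (filter (\<lambda>n. n mod 2 = i) w)"

lemma tag_mod [simp]: "i < 2 \<Longrightarrow> tag i b mod 2 = i"
  and tag_div [simp]: "i < 2 \<Longrightarrow> tag i b div 2 = b"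
  by (simp_all add: tag_def)

lemma inj_tag: "inj (tag i)"
  by (rule injI) (simp add: tag_def)

lemma tag_image_subset: "i < 2 \<Longrightarrow> tag i ` BB i \<subseteq> tagged_alphabet BB"
  unfolding tagged_alphabet_def by blast

lemma tagged_rulesI: "\<lbrakk>i < 2; (l, r) \<in> SS i\<rbrakk> \<Longrightarrow> (map (tag i) l, map (tag i) r) \<in> tagged_rules SS"
  unfolding tagged_rules_def by blast

lemma tagged_alphabet_eq: "tagged_alphabet BB = tag 0 ` BB 0 \<union> tag 1 ` BB 1"
  unfolding tagged_alphabet_def by (auto simp: less_2_cases_iff)

lemma tagged_rules_eq:
  "tagged_rules SS = map_prod (map (tag 0)) (map (tag 0)) ` SS 0 \<union> map_prod (map (tag 1)) (map (tag 1)) ` SS 1"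
  unfolding tagged_rules_def by (auto simp: less_2_cases_iff)

lemma untag_append [simp]: "untag i (u @ v) = untag i u @ untag i v"
  by (simp add: untag_def)

lemma untag_map_tag: "i < 2 \<Longrightarrow> untag j (map (tag i) l) = (if j = i then l else [])"
  by (induction l) (auto simp: untag_def)

lemma untag_lists: "\<lbrakk>w \<in> lists (tagged_alphabet BB); i < 2\<rbrakk> \<Longrightarrow> untag i w \<in> lists (BB i)"
  by (induction w) (auto simp: untag_def tagged_alphabet_def)

lemma lists_tag_image:
  assumes "set w \<subseteq> tag i ` B"
  obtains v where "v \<in> lists B" "w = map (tag i) v"
proof -
  have "w \<in> lists (tag i ` B)"
    using assms by auto
  then show ?thesis
    using that by (auto simp: lists_image)
qed

locale tagged_union =
  fixes BB :: "nat \<Rightarrow> nat set" and SS :: "nat \<Rightarrow> (nat list \<times> nat list) set"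
  assumes rules_lists: "\<And>i. i < 2 \<Longrightarrow> SS i \<subseteq> lists (BB i) \<times> lists (BB i)"
    and complete: "\<And>i. i < 2 \<Longrightarrow> complete_rs (BB i) (SS i)"
begin

abbreviation "tagged_step \<equiv> rstep (tagged_alphabet BB) (tagged_rules SS)"

lemma tagged_rulesE:
  assumes "(L, R) \<in> tagged_rules SS"
  obtains i l r where "i < 2" "(l, r) \<in> SS i" "L = map (tag i) l" "R = map (tag i) r"
    "l \<in> lists (BB i)" "r \<in> lists (BB i)"
  using assms rules_lists unfolding tagged_rules_def by blast

lemma tagged_rules_lists: "(L, R) \<in> tagged_rules SS \<Longrightarrow> L \<in> lists (tagged_alphabet BB) \<and> R \<in> lists (tagged_alphabet BB)"
  by (elim tagged_rulesE) (auto simp: map_in_lists[OF tag_image_subset])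

lemma tagged_rules_lhs_nonempty:
  assumes "(L, R) \<in> tagged_rules SS"
  shows "L \<noteq> []"
proof -
  obtain i l r where "i < 2" "(l, r) \<in> SS i" "L = map (tag i) l" "l \<in> lists (BB i)" "r \<in> lists (BB i)"
    using assms by (rule tagged_rulesE)
  moreover have "noetherian (BB i) (SS i)"
    using complete[OF \<open>i < 2\<close>] by (simp add: complete_rs_def)
  ultimately show ?thesis
    using noetherian_lhs_nonempty by blast
qed

lemma rtrancl_tag:
  "\<lbrakk>i < 2; (u, v) \<in> (rstep (BB i) (SS i))\<^sup>*\<rbrakk> \<Longrightarrow> (map (tag i) u, map (tag i) v) \<in> tagged_step\<^sup>*"
  by (rule rtrancl_rstep_map[OF tag_image_subset]) (auto intro: tagged_rulesI)

text \<open>Two redexes sharing a letter lie in the same alphabet; untagged, they are joinable there.\<close>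

lemma overlap_joinable:
  assumes Z1: "Z = u1 @ L1 @ v1" and Z2: "Z = u2 @ L2 @ v2"
    and rule1: "(L1, R1) \<in> tagged_rules SS" and rule2: "(L2, R2) \<in> tagged_rules SS"
    and letters: "set Z \<subseteq> set L1 \<union> set L2" and common: "set L1 \<inter> set L2 \<noteq> {}"
  shows "\<exists>z. (u1 @ R1 @ v1, z) \<in> tagged_step\<^sup>* \<and> (u2 @ R2 @ v2, z) \<in> tagged_step\<^sup>*"
proof -
  obtain i l1 r1 where i: "i < 2" and rule1': "(l1, r1) \<in> SS i" "L1 = map (tag i) l1" "R1 = map (tag i) r1"
    "l1 \<in> lists (BB i)" "r1 \<in> lists (BB i)"
    using rule1 by (rule tagged_rulesE)
  obtain j l2 r2 where "j < 2" and rule2': "(l2, r2) \<in> SS j" "L2 = map (tag j) l2" "R2 = map (tag j) r2"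
    "l2 \<in> lists (BB j)" "r2 \<in> lists (BB j)"
    using rule2 by (rule tagged_rulesE)
  obtain n where "n \<in> set L1" "n \<in> set L2"
    using common by blast
  have "n mod 2 = i"
    using \<open>n \<in> set L1\<close> i rule1'(2) by auto
  moreover have "n mod 2 = j"
    using \<open>n \<in> set L2\<close> \<open>j < 2\<close> rule2'(2) by auto
  ultimately have "j = i"
    by simp
  have untag: "\<exists>w'\<in>lists (BB i). w = map (tag i) w'" if "set w \<subseteq> set Z" for w
  proof -
    have "set w \<subseteq> tag i ` BB i"
      using that letters rule1' rule2' \<open>j = i\<close> by auto
    then show ?thesis
      by (metis lists_tag_image)
  qed
  have "set u1 \<subseteq> set Z" "set v1 \<subseteq> set Z" "set u2 \<subseteq> set Z" "set v2 \<subseteq> set Z"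
    using arg_cong[OF Z1, of set] arg_cong[OF Z2, of set] by auto
  then obtain u1' v1' u2' v2' where lists: "u1' \<in> lists (BB i)" "v1' \<in> lists (BB i)"
      "u2' \<in> lists (BB i)" "v2' \<in> lists (BB i)"
    and tagged: "u1 = map (tag i) u1'" "v1 = map (tag i) v1'" "u2 = map (tag i) u2'" "v2 = map (tag i) v2'"
    using untag by meson
  have "u1 @ L1 @ v1 = u2 @ L2 @ v2"
    using Z1 Z2 by (rule subst)
  then have "map (tag i) (u1' @ l1 @ v1') = map (tag i) (u2' @ l2 @ v2')"
    using rule1'(2) rule2'(2) tagged \<open>j = i\<close> by simp
  then have same: "u1' @ l1 @ v1' = u2' @ l2 @ v2'"
    by (simp only: inj_map_eq_map[OF inj_tag])
  have "(u1' @ l1 @ v1', u1' @ r1 @ v1') \<in> rstep (BB i) (SS i)"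
    using rule1' lists by (intro rstepI) auto
  moreover have "(u1' @ l1 @ v1', u2' @ r2 @ v2') \<in> rstep (BB i) (SS i)"
    unfolding same using rule2' lists \<open>j = i\<close> by (intro rstepI) auto
  moreover have "confluent (BB i) (SS i)"
    using complete[OF i] by (simp add: complete_rs_def)
  ultimately obtain z where "(u1' @ r1 @ v1', z) \<in> (rstep (BB i) (SS i))\<^sup>*"
    "(u2' @ r2 @ v2', z) \<in> (rstep (BB i) (SS i))\<^sup>*"
    unfolding confluent_def by blast
  moreover have "map (tag i) (u1' @ r1 @ v1') = u1 @ R1 @ v1"
    "map (tag i) (u2' @ r2 @ v2') = u2 @ R2 @ v2"
    using rule1'(3) rule2'(3) tagged \<open>j = i\<close> by simp_all
  ultimately have "(u1 @ R1 @ v1, map (tag i) z) \<in> tagged_step\<^sup>*" "(u2 @ R2 @ v2, map (tag i) z) \<in> tagged_step\<^sup>*"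
    using rtrancl_tag[OF i] by metis+
  then show ?thesis
    by blast
qed

lemma disjoint_redexes_joinable:
  assumes "(L1, R1) \<in> tagged_rules SS" "(L2, R2) \<in> tagged_rules SS"
    and "v \<in> lists (tagged_alphabet BB)" "y \<in> lists (tagged_alphabet BB)"
  shows "\<exists>z. (R1 @ v @ L2 @ y, z) \<in> tagged_step\<^sup>* \<and> (L1 @ v @ R2 @ y, z) \<in> tagged_step\<^sup>*"
proof -
  have "(R1 @ v @ L2 @ y, R1 @ v @ R2 @ y) \<in> tagged_step"
    using assms tagged_rules_lists rstepI[OF assms(2), of "R1 @ v" _ y] by simp
  moreover have "(L1 @ v @ R2 @ y, R1 @ v @ R2 @ y) \<in> tagged_step"
    using assms tagged_rules_lists rstepI[OF assms(1), of "[]" _ "v @ R2 @ y"] by simp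
  ultimately show ?thesis
    by blast
qed

lemma critical_pair_joinable:
  assumes W: "L1 @ y1 = u @ L2 @ y2" and rule1: "(L1, R1) \<in> tagged_rules SS"
    and rule2: "(L2, R2) \<in> tagged_rules SS" and W_lists: "L1 @ y1 \<in> lists (tagged_alphabet BB)"
  shows "\<exists>z. (R1 @ y1, z) \<in> tagged_step\<^sup>* \<and> (u @ R2 @ y2, z) \<in> tagged_step\<^sup>*"
proof -
  have y1: "y1 \<in> lists (tagged_alphabet BB)" and y2: "y2 \<in> lists (tagged_alphabet BB)"
    using W_lists W_lists[unfolded W] by simp_all
  consider (disjoint) v where "u = L1 @ v" "y1 = v @ L2 @ y2"
    | (inner) v where "L1 = u @ L2 @ v" "y2 = v @ y1"
    | (crossing) v w where "v \<noteq> []" "L1 = u @ v" "L2 = v @ w" "y1 = w @ y2"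
  proof -
    obtain v where "L1 = u @ v \<and> v @ y1 = L2 @ y2 \<or> L1 @ v = u \<and> y1 = v @ L2 @ y2"
      using append_eq_append_conv2[of L1 y1 u "L2 @ y2"] W by blast
    then show thesis
    proof
      assume v: "L1 = u @ v \<and> v @ y1 = L2 @ y2"
      then obtain w where "v = L2 @ w \<and> w @ y1 = y2 \<or> v @ w = L2 \<and> y1 = w @ y2"
        using append_eq_append_conv2[of v y1 L2 y2] by blast
      with v that show thesis
        by (cases "v = []") auto
    qed (use that in auto)
  qed
  then show ?thesis
  proof cases
    case (disjoint v)
    then show ?thesis
      using disjoint_redexes_joinable[OF rule1 rule2 _ y2, of v] y1 by auto
  next
    case (inner v)
    have "set L1 \<inter> set L2 \<noteq> {}"
      using inner tagged_rules_lhs_nonempty[OF rule2] by (cases L2) auto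
    then obtain z where "(R1, z) \<in> tagged_step\<^sup>*" "(u @ R2 @ v, z) \<in> tagged_step\<^sup>*"
      using overlap_joinable[of L1 "[]" L1 "[]" u L2 v, OF _ inner(1) rule1 rule2] by auto
    then have "(R1 @ y1, z @ y1) \<in> tagged_step\<^sup>*" "(u @ R2 @ y2, z @ y1) \<in> tagged_step\<^sup>*"
      using rtrancl_rstep_append_right[OF _ y1] inner(2) by fastforce+
    then show ?thesis
      by blast
  next
    case (crossing v w)
    have "set L1 \<inter> set L2 \<noteq> {}"
      using crossing by (cases v) auto
    then obtain z where "(R1 @ w, z) \<in> tagged_step\<^sup>*" "(u @ R2, z) \<in> tagged_step\<^sup>*"
      using overlap_joinable[of "L1 @ w" "[]" L1 w u L2 "[]", OF _ _ rule1 rule2] crossing by auto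
    then have "(R1 @ y1, z @ y2) \<in> tagged_step\<^sup>*" "(u @ R2 @ y2, z @ y2) \<in> tagged_step\<^sup>*"
      using rtrancl_rstep_append_right[OF _ y2] crossing(4) by fastforce+
    then show ?thesis
      by blast
  qed
qed

lemma local_confluence:
  assumes "(w, w1) \<in> tagged_step" "(w, w2) \<in> tagged_step"
  shows "\<exists>z. (w1, z) \<in> tagged_step\<^sup>* \<and> (w2, z) \<in> tagged_step\<^sup>*"
proof -
  obtain x1 L1 R1 y1 where 1: "w = x1 @ L1 @ y1" "w1 = x1 @ R1 @ y1" "(L1, R1) \<in> tagged_rules SS"
    "x1 \<in> lists (tagged_alphabet BB)" "y1 \<in> lists (tagged_alphabet BB)" "L1 \<in> lists (tagged_alphabet BB)"
    using assms(1) by (rule rstepE)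
  obtain x2 L2 R2 y2 where 2: "w = x2 @ L2 @ y2" "w2 = x2 @ R2 @ y2" "(L2, R2) \<in> tagged_rules SS"
    "x2 \<in> lists (tagged_alphabet BB)" "y2 \<in> lists (tagged_alphabet BB)" "L2 \<in> lists (tagged_alphabet BB)"
    using assms(2) by (rule rstepE)
  obtain u where "x1 = x2 @ u \<and> u @ L1 @ y1 = L2 @ y2 \<or> x1 @ u = x2 \<and> L1 @ y1 = u @ L2 @ y2"
    using append_eq_append_conv2[of x1 "L1 @ y1" x2 "L2 @ y2"] 1(1) 2(1) by blast
  then show ?thesis
  proof
    assume u: "x1 = x2 @ u \<and> u @ L1 @ y1 = L2 @ y2"
    then obtain z where "(R2 @ y2, z) \<in> tagged_step\<^sup>*" "(u @ R1 @ y1, z) \<in> tagged_step\<^sup>*"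
      using critical_pair_joinable[OF conjunct2[OF u, symmetric] 2(3) 1(3)] 2(5,6)
      by (meson append_in_lists_conv)
    then have "(w2, x2 @ z) \<in> tagged_step\<^sup>*" "(w1, x2 @ z) \<in> tagged_step\<^sup>*"
      using rtrancl_rstep_append_left[OF _ 2(4)] 1(2) 2(2) u by force+
    then show ?thesis
      by blast
  next
    assume u: "x1 @ u = x2 \<and> L1 @ y1 = u @ L2 @ y2"
    then obtain z where "(R1 @ y1, z) \<in> tagged_step\<^sup>*" "(u @ R2 @ y2, z) \<in> tagged_step\<^sup>*"
      using critical_pair_joinable[OF conjunct2[OF u] 1(3) 2(3)] 1(5,6)
      by (meson append_in_lists_conv)
    then have "(w1, x1 @ z) \<in> tagged_step\<^sup>*" "(w2, x1 @ z) \<in> tagged_step\<^sup>*"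
      using rtrancl_rstep_append_left[OF _ 1(4)] 1(2) 2(2) u by force+
    then show ?thesis
      by blast
  qed
qed

lemma untag_rstep:
  assumes "(w, w') \<in> tagged_step"
  shows "(untag 0 w, untag 0 w') \<in> rstep (BB 0) (SS 0) \<and> untag 1 w = untag 1 w'
       \<or> untag 0 w = untag 0 w' \<and> (untag 1 w, untag 1 w') \<in> rstep (BB 1) (SS 1)"
proof -
  obtain x L R y where w: "w = x @ L @ y" "w' = x @ R @ y" "(L, R) \<in> tagged_rules SS"
    "x \<in> lists (tagged_alphabet BB)" "y \<in> lists (tagged_alphabet BB)"
    using assms by (rule rstepE)
  obtain i l r where i: "i < 2" "(l, r) \<in> SS i" "L = map (tag i) l" "R = map (tag i) r"
    "l \<in> lists (BB i)" "r \<in> lists (BB i)"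
    using w(3) by (rule tagged_rulesE)
  have "(untag i w, untag i w') \<in> rstep (BB i) (SS i)"
    using rstepI[OF i(2) untag_lists[OF w(4) i(1)] untag_lists[OF w(5) i(1)] i(5,6)] w(1,2) i
    by (simp add: untag_map_tag)
  moreover have "untag j w = untag j w'" if "j \<noteq> i" for j
    using w(1,2) i that by (simp add: untag_map_tag)
  ultimately show ?thesis
    using i(1) by (auto simp: less_2_cases_iff)
qed

lemma noetherian_tagged: "noetherian (tagged_alphabet BB) (tagged_rules SS)"
proof -
  let ?R0 = "(rstep (BB 0) (SS 0))\<inverse>" and ?R1 = "(rstep (BB 1) (SS 1))\<inverse>"
  have "wf ?R0" "wf ?R1"
    using complete[of 0] complete[of 1] by (simp_all add: complete_rs_def noetherian_def)
  then have "wf (inv_image (?R0 <*lex*> ?R1) (\<lambda>w. (untag 0 w, untag 1 w)))"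
    by (intro wf_inv_image wf_lex_prod)
  moreover have "tagged_step\<inverse> \<subseteq> inv_image (?R0 <*lex*> ?R1) (\<lambda>w. (untag 0 w, untag 1 w))"
    using untag_rstep by fastforce
  ultimately show ?thesis
    unfolding noetherian_def by (rule wf_subset)
qed

lemma complete_tagged: "complete_rs (tagged_alphabet BB) (tagged_rules SS)"
  unfolding complete_rs_def confluent_def
  using noetherian_tagged newman[OF _ local_confluence] by (auto simp: noetherian_def)

end

subsection \<open>Free products of FCRS monoids\<close>

lemma presentation_induced_hom:
  assumes M: "monoid M" and pres: "presentation M B' S' f'" and g: "g ` B' \<subseteq> B"
    and rules: "\<And>l r. \<lbrakk>(l, r) \<in> S'; l \<in> lists B'; r \<in> lists B'\<rbrakk> \<Longrightarrow> (map g l, map g r) \<in> thue_cong B S"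
  obtains h where "h \<in> hom M (pres_monoid B S)"
    "\<And>u. u \<in> lists B' \<Longrightarrow> h (eval_word M f' u) = pres_class B S (map g u)"
proof -
  define h where "h m = pres_class B S (map g (SOME w. w \<in> lists B' \<and> eval_word M f' w = m))" for m
  have h_eval: "h (eval_word M f' u) = pres_class B S (map g u)" if u: "u \<in> lists B'" for u
  proof -
    let ?w = "SOME w. w \<in> lists B' \<and> eval_word M f' w = eval_word M f' u"
    have w: "?w \<in> lists B' \<and> eval_word M f' ?w = eval_word M f' u"
      by (rule someI[of _ u]) (simp add: u)
    then have "(?w, u) \<in> thue_cong B' S'"
      using presentation_eq_iff[OF pres _ u] by blast
    with g rules have "(map g ?w, map g u) \<in> thue_cong B S"
      by (rule thue_cong_map)
    then show ?thesis
      unfolding h_def using thue_cong_lists pres_class_eq_iff by metis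
  qed
  have "h \<in> hom M (pres_monoid B S)"
  proof (rule homI)
    fix x assume "x \<in> carrier M"
    with pres obtain u where "u \<in> lists B'" "eval_word M f' u = x"
      by (rule presentation_surj)
    then show "h x \<in> carrier (pres_monoid B S)"
      using h_eval g by (metis map_in_lists pres_class_in_carrier)
  next
    fix x y assume "x \<in> carrier M" "y \<in> carrier M"
    obtain u where u: "u \<in> lists B'" "eval_word M f' u = x"
      using pres \<open>x \<in> carrier M\<close> by (rule presentation_surj)
    obtain v where v: "v \<in> lists B'" "eval_word M f' v = y"
      using pres \<open>y \<in> carrier M\<close> by (rule presentation_surj)
    have "h (x \<otimes>\<^bsub>M\<^esub> y) = h (eval_word M f' (u @ v))"
      using u v eval_word_append[OF M presentation_funcset[OF pres]] by simp
    also have "\<dots> = pres_class B S (map g u) \<otimes>\<^bsub>pres_monoid B S\<^esub> pres_class B S (map g v)"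
      using u(1) v(1) g by (simp add: h_eval mult_pres_class map_in_lists)
    also have "\<dots> = h x \<otimes>\<^bsub>pres_monoid B S\<^esub> h y"
      using h_eval[OF u(1)] h_eval[OF v(1)] u(2) v(2) by simp
    finally show "h (x \<otimes>\<^bsub>M\<^esub> y) = h x \<otimes>\<^bsub>pres_monoid B S\<^esub> h y" .
  qed
  with h_eval that show ?thesis
    by blast
qed

definition tagged_gen ::
    "('a, 'e1) monoid_scheme \<Rightarrow> ('b, 'e2) monoid_scheme \<Rightarrow> (nat \<Rightarrow> 'a) \<Rightarrow> (nat \<Rightarrow> 'b) \<Rightarrow> nat \<Rightarrow> ('a + 'b) list set" where
  "tagged_gen M1 M2 f1 f2 n =
     (if n mod 2 = 0 then fp_inl M1 M2 (f1 (n div 2)) else fp_inr M1 M2 (f2 (n div 2)))"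

lemma tagged_gen_tag:
  "tagged_gen M1 M2 f1 f2 \<circ> tag 0 = fp_inl M1 M2 \<circ> f1"
  "tagged_gen M1 M2 f1 f2 \<circ> tag 1 = fp_inr M1 M2 \<circ> f2"
  by (auto simp: tagged_gen_def)

context tagged_union
begin

context
  fixes M1 :: "('a, 'e1) monoid_scheme" and M2 :: "('b, 'e2) monoid_scheme" and f1 f2
  assumes M1: "monoid M1" and M2: "monoid M2"
    and pres1: "presentation M1 (BB 0) (SS 0) f1" and pres2: "presentation M2 (BB 1) (SS 1) f2"
begin

abbreviation "gen \<equiv> tagged_gen M1 M2 f1 f2"

lemma f1_funcset: "f1 \<in> BB 0 \<rightarrow> carrier M1" and f2_funcset: "f2 \<in> BB 1 \<rightarrow> carrier M2"
  using pres1 pres2 by (simp_all add: presentation_funcset)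

lemma eval_gen_tag0:
  "u \<in> lists (BB 0) \<Longrightarrow> eval_word (free_product M1 M2) gen (map (tag 0) u) = fp_inl M1 M2 (eval_word M1 f1 u)"
  unfolding eval_word_map tagged_gen_tag(1)
  by (rule hom_eval_word[OF fp_inl_hom[of M1 M2, OF M1] fp_inl_one[OF M1] M1 f1_funcset, symmetric])

lemma eval_gen_tag1:
  "u \<in> lists (BB 1) \<Longrightarrow> eval_word (free_product M1 M2) gen (map (tag 1) u) = fp_inr M1 M2 (eval_word M2 f2 u)"
  unfolding eval_word_map tagged_gen_tag(2)
  by (rule hom_eval_word[OF fp_inr_hom[of M2 M1, OF M2] fp_inr_one[OF M2] M2 f2_funcset, symmetric])

lemma gen_funcset: "gen \<in> tagged_alphabet BB \<rightarrow> carrier (free_product M1 M2)"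
  using hom_in_carrier[OF fp_inl_hom[of M1 M2, OF M1]] hom_in_carrier[OF fp_inr_hom[of M2 M1, OF M2]]
    funcset_mem[OF f1_funcset] funcset_mem[OF f2_funcset]
  by (auto simp: tagged_alphabet_eq tagged_gen_def)

lemma map_tag_in_lists: "\<lbrakk>i < 2; u \<in> lists (BB i)\<rbrakk> \<Longrightarrow> map (tag i) u \<in> lists (tagged_alphabet BB)"
  by (rule map_in_lists[OF tag_image_subset])

lemma eval_gen_onto:
  assumes "w \<in> lists (fp_gens M1 M2)"
  shows "\<exists>u\<in>lists (tagged_alphabet BB). eval_word (free_product M1 M2) gen u = fp_class M1 M2 w"
  using assms
proof (induction w rule: lists.induct)
  case Nil
  have "eval_word (free_product M1 M2) gen [] = fp_class M1 M2 []"
    by (simp add: free_product_eq one_pres_monoid)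
  then show ?case
    by blast
next
  case (Cons x w)
  then obtain u where u: "u \<in> lists (tagged_alphabet BB)" "eval_word (free_product M1 M2) gen u = fp_class M1 M2 w"
    by blast
  obtain v where v: "v \<in> lists (tagged_alphabet BB)" "eval_word (free_product M1 M2) gen v = fp_class M1 M2 [x]"
  proof (cases x)
    case (Inl m)
    with Cons.hyps have "m \<in> carrier M1"
      by simp
    with pres1 obtain v where "v \<in> lists (BB 0)" "eval_word M1 f1 v = m"
      by (rule presentation_surj)
    with Inl that[of "map (tag 0) v"] show thesis
      by (simp add: eval_gen_tag0 map_tag_in_lists fp_inl_def)
  next
    case (Inr m)
    with Cons.hyps have "m \<in> carrier M2"
      by simp
    with pres2 obtain v where v: "v \<in> lists (BB 1)" "eval_word M2 f2 v = m"
      by (rule presentation_surj)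
    have "eval_word (free_product M1 M2) gen (map (tag 1) v) = fp_class M1 M2 [x]"
      unfolding eval_gen_tag1[OF v(1)] v(2) Inr fp_inr_def ..
    moreover have "map (tag 1) v \<in> lists (tagged_alphabet BB)"
      by (rule map_tag_in_lists[OF _ v(1)]) simp
    ultimately show thesis
      using that by blast
  qed
  have "fp_class M1 M2 (x # w) = fp_class M1 M2 [x] \<otimes>\<^bsub>free_product M1 M2\<^esub> fp_class M1 M2 w"
    unfolding free_product_eq using Cons.hyps by (rule pres_class_Cons)
  with u v show ?case
    by (intro bexI[of _ "v @ u"]) (simp_all add: eval_word_append[OF monoid_free_product gen_funcset])
qed

lemma gen_respects_rules: "respects_rules (free_product M1 M2) gen (tagged_alphabet BB) (tagged_rules SS)"
  unfolding respects_rules_def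
proof (intro allI impI)
  fix L R assume "(L, R) \<in> tagged_rules SS"
  then obtain i l r where i: "i < 2" "(l, r) \<in> SS i" "L = map (tag i) l" "R = map (tag i) r"
    "l \<in> lists (BB i)" "r \<in> lists (BB i)"
    by (rule tagged_rulesE)
  show "eval_word (free_product M1 M2) gen L = eval_word (free_product M1 M2) gen R"
  proof (cases "i = 0")
    case True
    with i show ?thesis
      using presentation_rule_eq[OF pres1] by (simp add: eval_gen_tag0)
  next
    case False
    with i have "i = 1"
      by simp
    note i1 = i[unfolded \<open>i = 1\<close>]
    show ?thesis
      unfolding i1(3,4) eval_gen_tag1[OF i1(5)] eval_gen_tag1[OF i1(6)]
      using presentation_rule_eq[OF pres2 i1(2,5,6)] by simp
  qed
qed

text \<open>
  The inverse map sends the copy of \<open>M1\<close> to the tagged words by choosing representatives;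
  the universal property of the free product glues the two halves.
\<close>

lemma gen_left_inverse:
  obtains \<Psi> where "\<Psi> \<in> hom (free_product M1 M2) (pres_monoid (tagged_alphabet BB) (tagged_rules SS))"
    "\<And>u. u \<in> lists (tagged_alphabet BB)
       \<Longrightarrow> \<Psi> (eval_word (free_product M1 M2) gen u) = pres_class (tagged_alphabet BB) (tagged_rules SS) u"
proof -
  let ?B = "tagged_alphabet BB" and ?S = "tagged_rules SS"
  let ?Q = "pres_monoid ?B ?S"
  have tag_rules: "(map (tag i) l, map (tag i) r) \<in> thue_cong ?B ?S"
    if "i < 2" "(l, r) \<in> SS i" "l \<in> lists (BB i)" "r \<in> lists (BB i)" for i l r
    using that by (intro rule_imp_thue_cong tagged_rulesI map_tag_in_lists)
  obtain h1 where h1: "h1 \<in> hom M1 ?Q"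
      "\<And>u. u \<in> lists (BB 0) \<Longrightarrow> h1 (eval_word M1 f1 u) = pres_class ?B ?S (map (tag 0) u)"
    using presentation_induced_hom[OF M1 pres1 tag_image_subset tag_rules] by auto
  obtain h2 where h2: "h2 \<in> hom M2 ?Q"
      "\<And>u. u \<in> lists (BB 1) \<Longrightarrow> h2 (eval_word M2 f2 u) = pres_class ?B ?S (map (tag 1) u)"
    using presentation_induced_hom[OF M2 pres2 tag_image_subset tag_rules] by auto
  have "h1 \<one>\<^bsub>M1\<^esub> = \<one>\<^bsub>?Q\<^esub>" "h2 \<one>\<^bsub>M2\<^esub> = \<one>\<^bsub>?Q\<^esub>"
    using h1(2)[of "[]"] h2(2)[of "[]"] by (simp_all add: one_pres_monoid)
  note lift = fp_lift_hom[OF monoid_pres_monoid h1(1) this(1) h2(1) this(2)]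
    fp_lift_one[OF monoid_pres_monoid h1(1) this(1) h2(1) this(2)]
    fp_lift_inl[OF monoid_pres_monoid h1(1) this(1) h2(1) this(2)]
    fp_lift_inr[OF monoid_pres_monoid h1(1) this(1) h2(1) this(2)]
  define \<Psi> where "\<Psi> = fp_lift ?Q h1 h2"
  have "\<Psi> (gen (tag 0 b)) = pres_class ?B ?S [tag 0 b]" if b: "b \<in> BB 0" for b
  proof -
    have fb: "f1 b \<in> carrier M1"
      using f1_funcset b by auto
    then have "\<Psi> (gen (tag 0 b)) = h1 (eval_word M1 f1 [b])"
      by (simp add: \<Psi>_def tagged_gen_def lift monoid.r_one[OF M1])
    then show ?thesis
      using h1(2)[of "[b]"] b by simp
  qed
  moreover have "\<Psi> (gen (tag 1 b)) = pres_class ?B ?S [tag 1 b]" if b: "b \<in> BB 1" for b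
  proof -
    have fb: "f2 b \<in> carrier M2"
      using f2_funcset b by auto
    then have "\<Psi> (gen (tag 1 b)) = h2 (eval_word M2 f2 [b])"
      by (simp add: \<Psi>_def tagged_gen_def lift monoid.r_one[OF M2])
    then show ?thesis
      using h2(2)[of "[b]"] b by simp
  qed
  ultimately have \<Psi>_gen: "\<Psi> (gen n) = pres_class ?B ?S [n]" if "n \<in> ?B" for n
    using that by (auto simp: tagged_alphabet_eq)
  have "\<Psi> (eval_word (free_product M1 M2) gen u) = pres_class ?B ?S u" if u: "u \<in> lists ?B" for u
  proof -
    have "\<Psi> (eval_word (free_product M1 M2) gen u) = eval_word ?Q (\<Psi> \<circ> gen) u"
      using lift(1,2) unfolding \<Psi>_def by (rule hom_eval_word[OF _ _ monoid_free_product gen_funcset u])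
    also have "\<dots> = eval_word ?Q (\<lambda>n. pres_class ?B ?S [n]) u"
      using u \<Psi>_gen by (intro eval_word_cong) auto
    also have "\<dots> = pres_class ?B ?S u"
      using eval_word_pres_class[of "\<lambda>n. n" u] u by simp
    finally show ?thesis .
  qed
  with lift(1) that show ?thesis
    unfolding \<Psi>_def by blast
qed

lemma presentation_free_product:
  "presentation (free_product M1 M2) (tagged_alphabet BB) (tagged_rules SS) gen"
  unfolding presentation_def
proof (intro conjI ballI)
  fix X assume "X \<in> carrier (free_product M1 M2)"
  then obtain w where "w \<in> lists (fp_gens M1 M2)" "X = fp_class M1 M2 w"
    unfolding free_product_eq by (rule carrier_pres_monoidE)
  then show "\<exists>u\<in>lists (tagged_alphabet BB). eval_word (free_product M1 M2) gen u = X"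
    using eval_gen_onto by blast
next
  fix u v assume uv: "u \<in> lists (tagged_alphabet BB)" "v \<in> lists (tagged_alphabet BB)"
  obtain \<Psi> where \<Psi>: "\<And>u. u \<in> lists (tagged_alphabet BB)
       \<Longrightarrow> \<Psi> (eval_word (free_product M1 M2) gen u) = pres_class (tagged_alphabet BB) (tagged_rules SS) u"
    using gen_left_inverse by blast
  show "eval_word (free_product M1 M2) gen u = eval_word (free_product M1 M2) gen v
      \<longleftrightarrow> (u, v) \<in> thue_cong (tagged_alphabet BB) (tagged_rules SS)"
  proof
    assume "eval_word (free_product M1 M2) gen u = eval_word (free_product M1 M2) gen v"
    then have "pres_class (tagged_alphabet BB) (tagged_rules SS) u = pres_class (tagged_alphabet BB) (tagged_rules SS) v"
      using \<Psi>[OF uv(1)] \<Psi>[OF uv(2)] by simp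
    then show "(u, v) \<in> thue_cong (tagged_alphabet BB) (tagged_rules SS)"
      using pres_class_eq_iff[OF uv] by blast
  qed (rule eval_word_thue_cong[OF monoid_free_product gen_funcset gen_respects_rules])
qed (rule gen_funcset)

end

end

lemma FCRS_free_product:
  assumes M1: "monoid M1" and M2: "monoid M2" and "FCRS M1" "FCRS M2"
  shows "FCRS (free_product M1 M2)"
proof -
  obtain B1 :: "nat set" and S1 f1 where B1: "finite B1" "finite S1" "S1 \<subseteq> lists B1 \<times> lists B1"
      "complete_rs B1 S1" "presentation M1 B1 S1 f1"
    using \<open>FCRS M1\<close> unfolding FCRS_iff_presentation[OF M1] by blast
  obtain B2 :: "nat set" and S2 f2 where B2: "finite B2" "finite S2" "S2 \<subseteq> lists B2 \<times> lists B2"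
      "complete_rs B2 S2" "presentation M2 B2 S2 f2"
    using \<open>FCRS M2\<close> unfolding FCRS_iff_presentation[OF M2] by blast
  define BB where "BB i = (if i = 0 then B1 else B2)" for i :: nat
  define SS where "SS i = (if i = 0 then S1 else S2)" for i :: nat
  interpret tagged_union BB SS
    using B1 B2 by unfold_locales (auto simp: BB_def SS_def)
  have "finite (tagged_alphabet BB)" "finite (tagged_rules SS)"
    using B1 B2 by (simp_all add: tagged_alphabet_eq tagged_rules_eq BB_def SS_def)
  moreover have "tagged_rules SS \<subseteq> lists (tagged_alphabet BB) \<times> lists (tagged_alphabet BB)"
    using tagged_rules_lists by auto
  moreover have "presentation (free_product M1 M2) (tagged_alphabet BB) (tagged_rules SS)
      (tagged_gen M1 M2 f1 f2)"
    using presentation_free_product[OF M1 M2] B1(5) B2(5) by (simp add: BB_def SS_def)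
  ultimately show ?thesis
    unfolding FCRS_iff_presentation[OF monoid_free_product] using complete_tagged by blast
qed

theorem corollary4p3:
  fixes M1 :: "('a, 'e1) monoid_scheme" and M2 :: "('b, 'e2) monoid_scheme"
  assumes "monoid M1" and "monoid M2"
    and "homogeneous_monoid M1" and "homogeneous_monoid M2"
  shows "FCRS (free_product M1 M2) \<longleftrightarrow> FCRS M1 \<and> FCRS M2"
proof
  assume FCRS12: "FCRS (free_product M1 M2)"
  have "FCRS (free_product M2 M1)"
    by (rule FCRS_iso[OF monoid_free_product free_product_commute[OF assms(1,2)] FCRS12])
  with FCRS12 show "FCRS M1 \<and> FCRS M2"
    using FCRS_free_product_factor[OF assms(1,2,4)] FCRS_free_product_factor[OF assms(2,1,3)] by blast
next
  assume "FCRS M1 \<and> FCRS M2"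
  then show "FCRS (free_product M1 M2)"
    using FCRS_free_product[OF assms(1,2)] by blast
qed

end
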